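(* Let $(V,\eta)$ be a real vector space of dimension $n+2$, $n>1$, with a symmetric bilinear form $\eta$ of signature $(+,-,\dots,-)$, let $G=SO_0(\eta)$ and $\mathfrak g=so(\eta)$. Fix $\mathbf s,\mathbf t\in V$ with $\eta(\mathbf s,\mathbf s)=-1$, $\eta(\mathbf t,\mathbf t)=1$, $\eta(\mathbf s,\mathbf t)=0$, and put $\mathbf f:=\mathbf t-\mathbf s$. Let $\mathfrak a:=\{Y\in\mathfrak g: Y\mathbf s=0\}$, $\mathfrak c:=\mathrm{span}\{\Lambda_{x\mathbf f}: x\in\mathbf s^\perp\}$, $A:=\{g\in G: g\mathbf s=\pm\mathbf s\}$, and let $\mathfrak a^0\subset\mathfrak g^*$ be the annihilator of $\mathfrak a$. Let $\{\cdot,\cdot\}$ be the Poisson bracket on $\mathfrak a^0\times A$ described in the context (the one dual to the Lie algebroid with sections $X_p^L$, $p\in\mathfrak c$). For $\varphi,\psi\in\mathfrak a^0$ define functions on $\mathfrak a^0\times A$ by $\tilde k_\varphi(\chi,a):=\tilde k(\varphi,\chi)$ and $\tilde k_{\varphi\psi}(\chi,a):=\tilde k(\varphi,\mathrm{ad}^\#(a)\psi)$, and put $\theta:=k(\Lambda_{\mathbf t\mathbf s})\in\mathfrak a^0$. Then for all $\varphi,\psi,\lambda,\mu\in\mathfrak a^0$: $$\{\tilde k_\varphi,\tilde k_\psi\}=\tilde k(\theta,\varphi)\tilde k_\psi-\tilde k(\theta,\psi)\tilde k_\varphi,$$ $$\{\tilde k_\lambda,\tilde k_{\varphi\psi}\}=\tilde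 k_{\lambda\psi}\big(\tilde k_{\varphi\theta}-\tilde k(\theta,\varphi)\big)+\tilde k(\lambda,\varphi)\big(\tilde k_{\theta\psi}-\tilde k(\theta,\psi)\big),$$ $$\{\tilde k_{\varphi\lambda},\tilde k_{\psi\mu}\}=0,$$ where the scalars $\tilde k(\theta,\varphi)$ etc. denote constant functions.
   Context: For $x,y\in V$, $\Lambda_{xy}\in so(\eta)$ is the operator $\Lambda_{xy}(z)=\eta(y,z)x-\eta(x,z)y$; $so(\eta)$ is spanned by these. $k$ is the nondegenerate bilinear form on $\mathfrak g$ with $k(\Lambda_{xy},\Lambda_{zt})=\eta(x,t)\eta(y,z)-\eta(x,z)\eta(y,t)$; also $k$ denotes the induced isomorphism $\mathfrak g\to\mathfrak g^*$, $\langle k(X),Y\rangle=k(X,Y)$, and $\tilde k(\varphi,\psi):=k(k^{-1}\varphi,k^{-1}\psi)$ on $\mathfrak g^*$. $\mathrm{ad}(g)X=gXg^{-1}$ and $\mathrm{ad}^\#(g)=\mathrm{ad}(g^{-1})^*$ (coadjoint action), so $\mathrm{ad}^\#(g)k(X)=k(\mathrm{ad}(g)X)$. One has $\mathfrak g=\mathfrak c\oplus\mathfrak a$ (direct sum of vector spaces); $P_{\mathfrak a}$ denotes the projection onto $\mathfrak a$ along $\mathfrak c$. For $p\in\mathfrak c$ define the function $\widetilde{X^L_p}(\varphi,a):=\langle\varphi,\mathrm{ad}(a)p\rangle$ on $\mathfrak a^0\times A$ and the vector field $\Pi^L(X^L_p)$ on $A$ by $\Pi^L(X^L_p)(a):=\frac{d}{dt}\big|_{t=0}\exp\big(tP_{\mathfrak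 a}(\mathrm{ad}(a)p)\big)a$. The Poisson bracket $\{\cdot,\cdot\}$ on $\mathfrak a^0\times A$ (which is $(TA)^0\subset T^*G$ identified via right translations) is the one satisfying, for $p,q\in\mathfrak c$ and smooth $f_1,f_2$ on $A$, with $\pi:\mathfrak a^0\times A\to A$ the projection: $\{\widetilde{X^L_p},\widetilde{X^L_q}\}=\widetilde{X^L_{[p,q]}}$, $\{\widetilde{X^L_p},\pi^*f_1\}=\pi^*(\Pi^L(X^L_p)f_1)$, $\{\pi^*f_1,\pi^*f_2\}=0$ (this is the linear Poisson structure dual to the Lie algebroid of the groupoid $AC\cap CA\rightrightarrows A$, $C$ being the connected subgroup with Lie algebra $\mathfrak c$). *)

theory Defs
  imports "HOL-Analysis.Analysis"
begin

type_synonym 'n mat = "real^'n^'n"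
type_synonym 'n dual = "'n mat \<Rightarrow> real"
type_synonym 'n pt = "'n dual \<times> 'n mat"

definition lorentz_form :: "(real^'n::finite \<Rightarrow> real^'n \<Rightarrow> real) \<Rightarrow> bool" where
  "lorentz_form eta \<longleftrightarrow> bilinear eta \<and> (\<forall>x y. eta x y = eta y x) \<and>
     (\<exists>(b :: 'n \<Rightarrow> real^'n) i0. \<forall>i j. eta (b i) (b j) =
        (if i = j then (if i = i0 then 1 else -1) else 0))"

definition Lam :: "(real^'n::finite \<Rightarrow> real^'n \<Rightarrow> real) \<Rightarrow> real^'n \<Rightarrow> real^'n \<Rightarrow> 'n mat" where
  "Lam eta x y = matrix (\<lambda>z. eta y z *\<^sub>R x - eta x z *\<^sub>R y)"

definition so_alg :: "(real^'n::finite \<Rightarrow> real^'n \<Rightarrow> real) \<Rightarrow> 'n mat set" where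
  "so_alg eta = {X. \<forall>x y. eta (X *v x) y + eta x (X *v y) = 0}"

definition O_grp :: "(real^'n::finite \<Rightarrow> real^'n \<Rightarrow> real) \<Rightarrow> 'n mat set" where
  "O_grp eta = {g. \<forall>x y. eta (g *v x) (g *v y) = eta x y}"

definition SO0 :: "(real^'n::finite \<Rightarrow> real^'n \<Rightarrow> real) \<Rightarrow> 'n mat set" where
  "SO0 eta = connected_component_set (O_grp eta) (mat 1)"

definition lie_br :: "('n::finite) mat \<Rightarrow> 'n mat \<Rightarrow> 'n mat" where
  "lie_br X Y = X ** Y - Y ** X"

definition ad :: "('n::finite) mat \<Rightarrow> 'n mat \<Rightarrow> 'n mat" where
  "ad g X = g ** X ** matrix_inv g"

definition mpow :: "('n::finite) mat \<Rightarrow> nat \<Rightarrow> 'n mat" where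
  "mpow X m = (((**) X) ^^ m) (mat 1)"

definition mexp :: "('n::finite) mat \<Rightarrow> 'n mat" where
  "mexp X = (\<Sum>m. (1 / fact m) *\<^sub>R mpow X m)"

definition kform :: "(real^'n::finite \<Rightarrow> real^'n \<Rightarrow> real) \<Rightarrow> 'n mat \<Rightarrow> 'n mat \<Rightarrow> real" where
  "kform eta = (SOME B. bilinear B \<and> (\<forall>x y z t.
      B (Lam eta x y) (Lam eta z t) = eta x t * eta y z - eta x z * eta y t))"

text \<open>g^* : linear functionals on g, encoded canonically as functions vanishing off g.\<close>
definition gdual :: "(real^'n::finite \<Rightarrow> real^'n \<Rightarrow> real) \<Rightarrow> 'n dual set" where
  "gdual eta = {phi. (\<forall>X\<in>so_alg eta. \<forall>Y\<in>so_alg eta. phi (X + Y) = phi X + phi Y) \<and>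
      (\<forall>c. \<forall>X\<in>so_alg eta. phi (c *\<^sub>R X) = c * phi X) \<and>
      (\<forall>X. X \<notin> so_alg eta \<longrightarrow> phi X = 0)}"

definition kdual :: "(real^'n::finite \<Rightarrow> real^'n \<Rightarrow> real) \<Rightarrow> 'n mat \<Rightarrow> 'n dual" where
  "kdual eta X = (\<lambda>Y. if Y \<in> so_alg eta then kform eta X Y else 0)"

definition kinv :: "(real^'n::finite \<Rightarrow> real^'n \<Rightarrow> real) \<Rightarrow> 'n dual \<Rightarrow> 'n mat" where
  "kinv eta phi = (THE X. X \<in> so_alg eta \<and> kdual eta X = phi)"

definition ktil :: "(real^'n::finite \<Rightarrow> real^'n \<Rightarrow> real) \<Rightarrow> 'n dual \<Rightarrow> 'n dual \<Rightarrow> real" where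
  "ktil eta phi psi = kform eta (kinv eta phi) (kinv eta psi)"

definition adsharp :: "(real^'n::finite \<Rightarrow> real^'n \<Rightarrow> real) \<Rightarrow> 'n mat \<Rightarrow> 'n dual \<Rightarrow> 'n dual" where
  "adsharp eta g phi = (\<lambda>Y. if Y \<in> so_alg eta then phi (ad (matrix_inv g) Y) else 0)"

definition a_alg :: "(real^'n::finite \<Rightarrow> real^'n \<Rightarrow> real) \<Rightarrow> real^'n \<Rightarrow> 'n mat set" where
  "a_alg eta s = {Y \<in> so_alg eta. Y *v s = 0}"

definition c_alg :: "(real^'n::finite \<Rightarrow> real^'n \<Rightarrow> real) \<Rightarrow> real^'n \<Rightarrow> real^'n \<Rightarrow> 'n mat set" where
  "c_alg eta s t = span {Lam eta x (t - s) | x. eta s x = 0}"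

definition A_grp :: "(real^'n::finite \<Rightarrow> real^'n \<Rightarrow> real) \<Rightarrow> real^'n \<Rightarrow> 'n mat set" where
  "A_grp eta s = {g \<in> SO0 eta. g *v s = s \<or> g *v s = - s}"

definition ann :: "(real^'n::finite \<Rightarrow> real^'n \<Rightarrow> real) \<Rightarrow> real^'n \<Rightarrow> 'n dual set" where
  "ann eta s = {phi \<in> gdual eta. \<forall>Y \<in> a_alg eta s. phi Y = 0}"

definition Pa :: "(real^'n::finite \<Rightarrow> real^'n \<Rightarrow> real) \<Rightarrow> real^'n \<Rightarrow> real^'n \<Rightarrow> 'n mat \<Rightarrow> 'n mat" where
  "Pa eta s t X = (THE Y. Y \<in> a_alg eta s \<and> X - Y \<in> c_alg eta s t)"

definition Dom :: "(real^'n::finite \<Rightarrow> real^'n \<Rightarrow> real) \<Rightarrow> real^'n \<Rightarrow> 'n pt set" where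
  "Dom eta s = ann eta s \<times> A_grp eta s"

fun iter_dd :: "'v::real_normed_vector list \<Rightarrow> ('v \<Rightarrow> real) \<Rightarrow> 'v \<Rightarrow> real" where
  "iter_dd [] G = G"
| "iter_dd (v # vs) G = (\<lambda>x. frechet_derivative (iter_dd vs G) (at x) v)"

definition smooth_on :: "'v::real_normed_vector set \<Rightarrow> ('v \<Rightarrow> real) \<Rightarrow> bool" where
  "smooth_on U G \<longleftrightarrow> open U \<and> (\<forall>vs. iter_dd vs G differentiable_on U)"

definition smooth_A :: "(real^'n::finite \<Rightarrow> real^'n \<Rightarrow> real) \<Rightarrow> real^'n \<Rightarrow> ('n mat \<Rightarrow> real) \<Rightarrow> bool" where
  "smooth_A eta s f \<longleftrightarrow> (\<exists>U g. smooth_on U g \<and> A_grp eta s \<subseteq> U \<and> (\<forall>a \<in> A_grp eta s. f a = g a))"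

text \<open>smooth functions on a^0 x A (a^0 embedded in g via k^-1), encoded as vanishing off the domain\<close>
definition smooth_D :: "(real^'n::finite \<Rightarrow> real^'n \<Rightarrow> real) \<Rightarrow> real^'n \<Rightarrow> ('n pt \<Rightarrow> real) \<Rightarrow> bool" where
  "smooth_D eta s F \<longleftrightarrow>
     (\<exists>U (G :: 'n mat \<times> 'n mat \<Rightarrow> real). smooth_on U G \<and>
        (\<forall>(chi, a) \<in> Dom eta s. (kinv eta chi, a) \<in> U \<and> F (chi, a) = G (kinv eta chi, a))) \<and>
     (\<forall>z. z \<notin> Dom eta s \<longrightarrow> F z = 0)"

definition XL :: "(real^'n::finite \<Rightarrow> real^'n \<Rightarrow> real) \<Rightarrow> real^'n \<Rightarrow> 'n mat \<Rightarrow> 'n pt \<Rightarrow> real" where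
  "XL eta s p = (\<lambda>(chi, a). if (chi, a) \<in> Dom eta s then chi (ad a p) else 0)"

definition pull :: "(real^'n::finite \<Rightarrow> real^'n \<Rightarrow> real) \<Rightarrow> real^'n \<Rightarrow> ('n mat \<Rightarrow> real) \<Rightarrow> 'n pt \<Rightarrow> real" where
  "pull eta s f = (\<lambda>(chi, a). if (chi, a) \<in> Dom eta s then f a else 0)"

definition PiL :: "(real^'n::finite \<Rightarrow> real^'n \<Rightarrow> real) \<Rightarrow> real^'n \<Rightarrow> real^'n \<Rightarrow> 'n mat \<Rightarrow> ('n mat \<Rightarrow> real) \<Rightarrow> 'n mat \<Rightarrow> real" where
  "PiL eta s t p f a = deriv (\<lambda>\<tau>. f (mexp (\<tau> *\<^sub>R Pa eta s t (ad a p)) ** a)) 0"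

text \<open>The defining properties of the Poisson bracket on a^0 x A (values on the domain only).\<close>
definition is_poisson_bracket :: "(real^'n::finite \<Rightarrow> real^'n \<Rightarrow> real) \<Rightarrow> real^'n \<Rightarrow> real^'n \<Rightarrow>
    (('n pt \<Rightarrow> real) \<Rightarrow> ('n pt \<Rightarrow> real) \<Rightarrow> 'n pt \<Rightarrow> real) \<Rightarrow> bool" where
  "is_poisson_bracket eta s t br \<longleftrightarrow>
    (\<forall>F G H z. smooth_D eta s F \<and> smooth_D eta s G \<and> smooth_D eta s H \<and> z \<in> Dom eta s \<longrightarrow>
        br (\<lambda>w. F w + G w) H z = br F H z + br G H z \<and>
        br F G z = - br G F z \<and>
        br F (\<lambda>w. G w * H w) z = br F G z * H z + G z * br F H z) \<and>
    (\<forall>F G c z. smooth_D eta s F \<and> smooth_D eta s G \<and> z \<in> Dom eta s \<longrightarrow>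
        br (\<lambda>w. c * F w) G z = c * br F G z) \<and>
    (\<forall>p q z. p \<in> c_alg eta s t \<and> q \<in> c_alg eta s t \<and> z \<in> Dom eta s \<longrightarrow>
        br (XL eta s p) (XL eta s q) z = XL eta s (lie_br p q) z) \<and>
    (\<forall>p f z. p \<in> c_alg eta s t \<and> smooth_A eta s f \<and> z \<in> Dom eta s \<longrightarrow>
        br (XL eta s p) (pull eta s f) z = pull eta s (PiL eta s t p f) z) \<and>
    (\<forall>f1 f2 z. smooth_A eta s f1 \<and> smooth_A eta s f2 \<and> z \<in> Dom eta s \<longrightarrow>
        br (pull eta s f1) (pull eta s f2) z = 0)"

definition kt1 :: "(real^'n::finite \<Rightarrow> real^'n \<Rightarrow> real) \<Rightarrow> real^'n \<Rightarrow> 'n dual \<Rightarrow> 'n pt \<Rightarrow> real" where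
  "kt1 eta s phi = (\<lambda>(chi, a). if (chi, a) \<in> Dom eta s then ktil eta phi chi else 0)"

definition kt2 :: "(real^'n::finite \<Rightarrow> real^'n \<Rightarrow> real) \<Rightarrow> real^'n \<Rightarrow> 'n dual \<Rightarrow> 'n dual \<Rightarrow> 'n pt \<Rightarrow> real" where
  "kt2 eta s phi psi = (\<lambda>(chi, a). if (chi, a) \<in> Dom eta s then ktil eta phi (adsharp eta a psi) else 0)"

end

theory Submission
  imports Defs
begin

(*
  On a^0 x A every function in the theorem is a polynomial expression in the generators X^L_p and in
  functions pulled back from A. Write v_phi = k^-1(phi) s, a vector orthogonal to s, and let
  sigma(a) = +-1 be given by a s = sigma(a) s. Since phi vanishes on a, phi(Y) = eta(Y s, v_phi); hence
    k~_phi(chi, a)       = eta(v_chi, v_phi) = sum_i u_i(a) X^L_{p_i}(chi, a),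
    k~_{phi psi}(chi, a) = sigma(a) eta(a v_psi, v_phi),
  where p_i = Lambda_{x_i f} runs through a spanning family of c and u(a) = sigma(a) a^-1 v_phi.
  The brackets then follow from the Leibniz rule and the defining relations of the bracket, using
  [Lambda_{x f}, Lambda_{y f}] = Lambda_{eta(f,y) x - eta(f,x) y, f} (f is null) and
  P_a(X) = X - Lambda_{X s, f}. The third identity is immediate, both functions being pulled back from A.
*)

lemma matrix_vector_mult_scaleR_left [simp]:
  fixes A :: "real^'n^'m"
  shows "(c *\<^sub>R A) *v x = c *\<^sub>R (A *v x)"
  by (simp add: scaleR_matrix_vector_assoc)

lemma matrix_vector_mult_uminus_left [simp]:
  fixes A :: "real^'n^'m"
  shows "(- A) *v x = - (A *v x)"
  by (simp add: vec_eq_iff matrix_vector_mult_def sum_negf)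

lemma matrix_vector_mult_uminus_right [simp]:
  fixes A :: "real^'n^'m"
  shows "A *v (- x) = - (A *v x)"
  by (simp add: vec_eq_iff matrix_vector_mult_def sum_negf)

lemma matrix_vector_mult_sum_left:
  fixes X :: "'i \<Rightarrow> real^'n^'m"
  shows "(\<Sum>i\<in>S. X i) *v x = (\<Sum>i\<in>S. X i *v x)"
  by (induction S rule: infinite_finite_induct) (auto simp: matrix_vector_mult_add_rdistrib)

lemma matrix_eqI: "(\<And>x. A *v x = B *v x) \<Longrightarrow> A = (B::real^'n^'m)"
  using matrix_eq by blast

lemma matrix_works_real: "linear (f :: real^'n \<Rightarrow> real^'m) \<Longrightarrow> matrix f *v x = f x"
  by (rule matrix_works) (simp add: linear_matrix_vector_mul_eq)

declare matrix_vector_mult_add_rdistrib [simp] matrix_vector_mult_diff_rdistrib [simp]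
  matrix_vector_right_distrib [simp] matrix_vector_mult_diff_distrib [simp]
  matrix_vector_mult_scaleR [simp] matrix_vector_mul_assoc [symmetric, simp]

lemma bilinear_matrix_matrix_mult: "bilinear ((**) :: real^'n^'m \<Rightarrow> real^'p^'n \<Rightarrow> real^'p^'m)"
  unfolding bilinear_def
  by (auto intro!: linearI simp: vec_eq_iff matrix_matrix_mult_def sum.distrib algebra_simps sum_distrib_left)

lemma bilinear_matrix_vector_mult: "bilinear ((*v) :: real^'n^'m \<Rightarrow> real^'n \<Rightarrow> real^'m)"
  unfolding bilinear_def by (auto intro!: linearI simp: algebra_simps)

lemma linear_component_expansion:
  "linear (l :: real^'n \<Rightarrow> real) \<Longrightarrow> l w = (\<Sum>i\<in>UNIV. w $ i * l (axis i 1))"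
  by (subst (1) basis_expansion[symmetric]) (simp add: linear_sum linear_scale scalar_mult_eq_scaleR)

section \<open>Polynomial functions are smooth\<close>

lemma real_polynomial_function_has_derivative:
  "real_polynomial_function f \<Longrightarrow>
     \<exists>D. (\<forall>x. (f has_derivative D x) (at x)) \<and> (\<forall>v. real_polynomial_function (\<lambda>x. D x v))"
proof (induction rule: real_polynomial_function.induct)
  case (linear f)
  then show ?case by (intro exI[of _ "\<lambda>x. f"]) (auto intro: bounded_linear.has_derivative)
next
  case (const c)
  then show ?case by (intro exI[of _ "\<lambda>x v. 0"]) auto
next
  case (add f g)
  then obtain Df Dg where "\<forall>x. (f has_derivative Df x) (at x)" "\<forall>v. real_polynomial_function (\<lambda>x. Df x v)"
    "\<forall>x. (g has_derivative Dg x) (at x)" "\<forall>v. real_polynomial_function (\<lambda>x. Dg x v)" by blast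
  then show ?case by (intro exI[of _ "\<lambda>x v. Df x v + Dg x v"]) (auto intro!: has_derivative_add)
next
  case (mult f g)
  then obtain Df Dg where "\<forall>x. (f has_derivative Df x) (at x)" "\<forall>v. real_polynomial_function (\<lambda>x. Df x v)"
    "\<forall>x. (g has_derivative Dg x) (at x)" "\<forall>v. real_polynomial_function (\<lambda>x. Dg x v)" by blast
  with mult.hyps show ?case
    by (intro exI[of _ "\<lambda>x v. f x * Dg x v + Df x v * g x"])
      (auto intro!: has_derivative_mult real_polynomial_function.intros(3,4))
qed

lemma real_polynomial_function_iter_dd:
  "real_polynomial_function f \<Longrightarrow> real_polynomial_function (iter_dd vs f)"
proof (induction vs)
  case (Cons v vs)
  then obtain D where D: "\<forall>x. (iter_dd vs f has_derivative D x) (at x)"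
    "\<forall>v. real_polynomial_function (\<lambda>x. D x v)"
    using real_polynomial_function_has_derivative by blast
  then have "D x = frechet_derivative (iter_dd vs f) (at x)" for x
    using frechet_derivative_at by blast
  then have "iter_dd (v # vs) f = (\<lambda>x. D x v)" by simp
  then show ?case using D(2) by simp
qed simp

lemma smooth_on_real_polynomial_function: "real_polynomial_function f \<Longrightarrow> smooth_on UNIV f"
  unfolding smooth_on_def
  by (simp add: real_polynomial_function_iter_dd differentiable_on_real_polynomial_function)

lemma polynomial_function_bounded_bilinear:
  fixes f :: "'a::real_normed_vector \<Rightarrow> 'b::euclidean_space" and g :: "'a \<Rightarrow> 'c::euclidean_space"
  assumes B: "bounded_bilinear B" and f: "polynomial_function f" and g: "polynomial_function g"
  shows "polynomial_function (\<lambda>x. B (f x) (g x))"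
proof -
  have "B (f x) (g x) = (\<Sum>j\<in>Basis. (g x \<bullet> j) *\<^sub>R (\<Sum>i\<in>Basis. (f x \<bullet> i) *\<^sub>R B i j))" for x
    by (subst (1 2) euclidean_representation[symmetric])
      (simp add: bounded_bilinear.sum_left[OF B] bounded_bilinear.sum_right[OF B]
        bounded_bilinear.scaleR_left[OF B] bounded_bilinear.scaleR_right[OF B])
  moreover have "polynomial_function (\<lambda>x. (g x \<bullet> j) *\<^sub>R (\<Sum>i\<in>Basis. (f x \<bullet> i) *\<^sub>R B i j))" for j
    using f g by (intro polynomial_function_mult polynomial_function_sum polynomial_function_inner) auto
  ultimately show ?thesis by (simp add: polynomial_function_sum)
qed

lemma polynomial_function_linear:
  fixes f :: "'a::euclidean_space \<Rightarrow> 'b::real_normed_vector"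
  shows "linear f \<Longrightarrow> polynomial_function f"
  by (simp add: polynomial_function_bounded_linear linear_conv_bounded_linear)

lemma polynomial_function_bilinear:
  fixes f :: "'a::real_normed_vector \<Rightarrow> 'b::euclidean_space" and g :: "'a \<Rightarrow> 'c::euclidean_space"
  shows "bilinear B \<Longrightarrow> polynomial_function f \<Longrightarrow> polynomial_function g \<Longrightarrow>
    polynomial_function (\<lambda>x. B (f x) (g x) :: 'd::euclidean_space)"
  by (simp add: polynomial_function_bounded_bilinear bilinear_conv_bounded_bilinear)

lemma polynomial_function_matrix_mult:
  "polynomial_function F \<Longrightarrow> polynomial_function G \<Longrightarrow>
    polynomial_function (\<lambda>x. F x ** (G x :: real^'p^'n) :: real^'p^'m)"
  by (rule polynomial_function_bilinear[OF bilinear_matrix_matrix_mult])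

lemma polynomial_function_matrix_vector_mult:
  "polynomial_function F \<Longrightarrow> polynomial_function G \<Longrightarrow>
    polynomial_function (\<lambda>x. F x *v (G x :: real^'n) :: real^'m)"
  by (rule polynomial_function_bilinear[OF bilinear_matrix_vector_mult])

section \<open>The matrix exponential\<close>

lemma mpow_0 [simp]: "mpow X 0 = mat 1"
  and mpow_Suc: "mpow X (Suc m) = X ** mpow X m"
  by (simp_all add: mpow_def)

lemma mpow_scaleR: "mpow (c *\<^sub>R X) m = c ^ m *\<^sub>R mpow (X::real^'n^'n) m"
  by (induction m)
    (simp_all add: mpow_Suc bilinear_lmul[OF bilinear_matrix_matrix_mult]
      bilinear_rmul[OF bilinear_matrix_matrix_mult])

lemma mpow_entry_bound:
  fixes Y :: "real^'n^'n"
  defines "K \<equiv> \<Sum>i\<in>UNIV. \<Sum>k\<in>UNIV. \<bar>Y $ i $ k\<bar>"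
  shows "\<bar>mpow Y m $ i $ j\<bar> \<le> K ^ m"
proof (induction m arbitrary: i j)
  case 0
  then show ?case by (simp add: mat_def)
next
  case (Suc m)
  have "\<bar>mpow Y (Suc m) $ i $ j\<bar> \<le> (\<Sum>k\<in>UNIV. \<bar>Y $ i $ k\<bar> * \<bar>mpow Y m $ k $ j\<bar>)"
    unfolding mpow_Suc matrix_matrix_mult_def by (auto intro: order_trans[OF sum_abs] simp: abs_mult)
  also have "\<dots> \<le> (\<Sum>k\<in>UNIV. \<bar>Y $ i $ k\<bar>) * K ^ m"
    unfolding sum_distrib_right by (intro sum_mono mult_left_mono Suc.IH) simp
  also have "\<dots> \<le> K * K ^ m"
    unfolding K_def by (intro mult_right_mono member_le_sum zero_le_power) (auto intro: sum_nonneg)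
  finally show ?case by simp
qed

lemma mexp_entry_summable:
  fixes Y :: "real^'n^'n"
  shows "summable (\<lambda>m. (mpow Y m $ i $ j / fact m) * y ^ m)"
proof (rule summable_comparison_test'[where N=0, OF summable_exp])
  define K where "K = (\<Sum>i\<in>UNIV. \<Sum>k\<in>UNIV. \<bar>Y $ i $ k\<bar>)"
  fix m
  have "norm ((mpow Y m $ i $ j / fact m) * y ^ m) = inverse (fact m) * (\<bar>mpow Y m $ i $ j\<bar> * \<bar>y\<bar> ^ m)"
    by (simp add: abs_mult power_abs divide_inverse)
  also have "\<dots> \<le> inverse (fact m) * (K ^ m * \<bar>y\<bar> ^ m)"
    by (intro mult_left_mono mult_right_mono) (auto simp: mpow_entry_bound K_def)
  finally show "norm ((mpow Y m $ i $ j / fact m) * y ^ m) \<le> inverse (fact m) * (K * \<bar>y\<bar>) ^ m"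
    by (simp add: power_mult_distrib)
qed

lemma summable_mexp: "summable (\<lambda>m. (1 / fact m) *\<^sub>R mpow (Y::real^'n^'n) m)"
proof (rule summable_comparison_test'[where N=0, OF summable_mult[OF summable_exp]])
  define K where "K = (\<Sum>i\<in>UNIV. \<Sum>k\<in>UNIV. \<bar>Y $ i $ k\<bar>)"
  fix m
  have norm_le: "norm M \<le> (\<Sum>i\<in>UNIV. \<Sum>j\<in>UNIV. \<bar>M $ i $ j\<bar>)" for M :: "real^'n^'n"
    by (rule order_trans[OF _ sum_mono[OF norm_le_l1_cart]]) (simp add: norm_vec_def L2_set_le_sum)
  have "norm ((1 / fact m) *\<^sub>R mpow Y m) = inverse (fact m) * norm (mpow Y m)"
    by (simp add: divide_inverse)
  also have "\<dots> \<le> inverse (fact m) * (\<Sum>i\<in>(UNIV::'n set). \<Sum>j\<in>(UNIV::'n set). K ^ m)"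
    by (intro mult_left_mono order_trans[OF norm_le] sum_mono) (simp_all add: mpow_entry_bound K_def)
  finally show "norm ((1 / fact m) *\<^sub>R mpow Y m) \<le> of_nat (CARD('n) * CARD('n)) * (inverse (fact m) * K ^ m)"
    by (simp add: divide_inverse mult_ac)
qed

lemma mexp_entry: "mexp (\<tau> *\<^sub>R (Y::real^'n^'n)) $ i $ j = (\<Sum>m. (mpow Y m $ i $ j / fact m) * \<tau> ^ m)"
proof -
  have "bounded_linear (\<lambda>M::real^'n^'n. M $ i $ j)"
    by (rule bounded_linear_compose[OF bounded_linear_vec_nth bounded_linear_vec_nth])
  then have "mexp (\<tau> *\<^sub>R Y) $ i $ j = (\<Sum>m. ((1 / fact m) *\<^sub>R mpow (\<tau> *\<^sub>R Y) m) $ i $ j)"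
    unfolding mexp_def by (rule bounded_linear.suminf[OF _ summable_mexp])
  also have "\<dots> = (\<Sum>m. (mpow Y m $ i $ j / fact m) * \<tau> ^ m)"
    by (rule suminf_cong) (simp add: mpow_scaleR)
  finally show ?thesis .
qed

lemma mexp_0: "mexp (0::real^'n^'n) = mat 1"
proof -
  have "mexp (0 *\<^sub>R (0::real^'n^'n)) $ i $ j = mpow 0 0 $ i $ j / fact 0" for i j
    unfolding mexp_entry by (rule powser_zero)
  then show ?thesis by (simp add: vec_eq_iff)
qed

lemma has_field_derivative_mexp_entry:
  "((\<lambda>\<tau>. mexp (\<tau> *\<^sub>R (Y::real^'n^'n)) $ i $ j) has_field_derivative (Y $ i $ j)) (at 0)"
proof -
  define c where "c = (\<lambda>m. mpow Y m $ i $ j / fact m)"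
  have "((\<lambda>\<tau>. \<Sum>m. c m * \<tau> ^ m) has_field_derivative (\<Sum>n. diffs c n * 0 ^ n)) (at 0)"
    unfolding c_def by (rule termdiffs_strong_converges_everywhere[OF mexp_entry_summable])
  moreover have "(\<Sum>n. diffs c n * 0 ^ n) = diffs c 0" by (rule powser_zero)
  moreover have "diffs c 0 = Y $ i $ j" by (simp add: diffs_def c_def mpow_Suc)
  ultimately show ?thesis by (simp add: mexp_entry c_def)
qed

lemma has_vector_derivative_matrix_entrywise:
  fixes F :: "real \<Rightarrow> real^'n^'m"
  assumes "\<And>i j. ((\<lambda>\<tau>. F \<tau> $ i $ j) has_field_derivative (D $ i $ j)) (at x)"
  shows "(F has_vector_derivative D) (at x)"
  unfolding has_vector_derivative_def
proof (subst has_derivative_componentwise_within, intro ballI)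
  fix u :: "real^'n^'m" assume "u \<in> Basis"
  then obtain i j where u: "u = axis i (axis j 1)" by (auto simp: Basis_vec_def)
  have "(\<lambda>h. h * D $ i $ j) = (*) (D $ i $ j)" by (auto simp: mult.commute)
  then have "((\<lambda>\<tau>. F \<tau> $ i $ j) has_derivative (\<lambda>h. h * D $ i $ j)) (at x)"
    using assms[of i j] by (simp add: has_field_derivative_def)
  then show "((\<lambda>\<tau>. F \<tau> \<bullet> u) has_derivative (\<lambda>h. (h *\<^sub>R D) \<bullet> u)) (at x within UNIV)"
    by (simp add: u inner_axis)
qed

lemma deriv_mexp_curve:
  fixes a Y :: "real^'n^'n"
  assumes g: "(g has_derivative Dg) (at a)"
  shows "deriv (\<lambda>\<tau>. g (mexp (\<tau> *\<^sub>R Y) ** a)) 0 = Dg (Y ** a)"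
proof -
  have "linear (\<lambda>M::real^'n^'n. M ** a)"
    using bilinear_matrix_matrix_mult unfolding bilinear_def by blast
  then have "bounded_linear (\<lambda>M::real^'n^'n. M ** a)"
    by (simp add: linear_conv_bounded_linear)
  moreover have "((\<lambda>\<tau>. mexp (\<tau> *\<^sub>R Y)) has_derivative (\<lambda>h. h *\<^sub>R Y)) (at 0)"
    using has_vector_derivative_matrix_entrywise[OF has_field_derivative_mexp_entry]
    by (simp add: has_vector_derivative_def)
  ultimately have curve: "((\<lambda>\<tau>. mexp (\<tau> *\<^sub>R Y) ** a) has_derivative (\<lambda>h. (h *\<^sub>R Y) ** a)) (at 0)"
    by (rule bounded_linear.has_derivative)
  have "(g has_derivative Dg) (at (mexp (0 *\<^sub>R Y) ** a))"
    using g by (simp add: mexp_0)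
  from diff_chain_at[OF curve this]
  have "((\<lambda>\<tau>. g (mexp (\<tau> *\<^sub>R Y) ** a)) has_derivative (\<lambda>h. Dg ((h *\<^sub>R Y) ** a))) (at 0)"
    by (simp add: o_def)
  moreover have "Dg ((h *\<^sub>R Y) ** a) = Dg (Y ** a) * h" for h
    using linear_scale[OF bounded_linear.linear[OF has_derivative_bounded_linear[OF g]]]
    by (simp add: bilinear_lmul[OF bilinear_matrix_matrix_mult])
  ultimately show ?thesis
    by (intro DERIV_imp_deriv) (simp add: has_field_derivative_def)
qed

section \<open>Nondegenerate symmetric forms\<close>

locale pseudo_euclidean =
  fixes eta :: "real^'n::finite \<Rightarrow> real^'n \<Rightarrow> real" and b :: "'n \<Rightarrow> real^'n"
  assumes bil: "bilinear eta" and eta_sym: "\<And>x y. eta x y = eta y x"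
    and basis_orth: "\<And>i j. i \<noteq> j \<Longrightarrow> eta (b i) (b j) = 0"
    and basis_sq: "\<And>i. eta (b i) (b i) = 1 \<or> eta (b i) (b i) = -1"
begin

definition eps :: "'n \<Rightarrow> real" where "eps i = eta (b i) (b i)"

lemma eps_sq [simp]: "eps i * eps i = 1"
  using basis_sq[of i] unfolding eps_def by auto

lemmas eta_simps [simp] =
  bilinear_ladd[OF bil] bilinear_radd[OF bil] bilinear_lsub[OF bil] bilinear_rsub[OF bil]
  bilinear_lmul[OF bil] bilinear_rmul[OF bil] bilinear_lneg[OF bil] bilinear_rneg[OF bil]
  bilinear_lzero[OF bil] bilinear_rzero[OF bil]

lemma eta_sum_left: "eta (\<Sum>i\<in>S. f i) x = (\<Sum>i\<in>S. eta (f i) x)"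
  using linear_sum[of "\<lambda>y. eta y x"] bil by (simp add: bilinear_def)

lemma eta_sum_right: "eta x (\<Sum>i\<in>S. f i) = (\<Sum>i\<in>S. eta x (f i))"
  using linear_sum[of "eta x"] bil by (simp add: bilinear_def)

lemma eta_basis: "eta (b k) (b j) = (if k = j then eps k else 0)"
  using basis_orth eps_def by auto

lemma eta_basis_expansion: "z = (\<Sum>j\<in>UNIV. (eps j * eta (b j) z) *\<^sub>R b j)"
proof -
  define L where "L = (\<lambda>c::real^'n. \<Sum>j\<in>UNIV. c$j *\<^sub>R b j)"
  have lin: "linear L" unfolding L_def
    by (rule linearI) (simp_all add: sum.distrib scaleR_add_left scaleR_sum_right algebra_simps)
  have eta_L: "eta (b k) (L c) = c$k * eps k" for k c
    unfolding L_def eta_sum_right by (simp add: eta_basis if_distrib cong: if_cong)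
  have "inj L"
  proof (rule linear_injective_0[OF lin, THEN iffD2], intro allI impI)
    fix c assume "L c = 0"
    then have "c$k * eps k = 0" for k using eta_L[of k c] by simp
    moreover have "eps k \<noteq> 0" for k using eps_sq[of k] by (metis mult_zero_left zero_neq_one)
    ultimately show "c = 0" by (simp add: vec_eq_iff)
  qed
  then obtain c where c: "z = L c" by (metis linear_inj_imp_surj[OF lin] surj_def)
  have "eps j * eta (b j) z = c$j * (eps j * eps j)" for j
    using eta_L[of j c] c by (simp add: mult_ac)
  then have "c$j = eps j * eta (b j) z" for j by simp
  then have "(\<Sum>j\<in>UNIV. (eps j * eta (b j) z) *\<^sub>R b j) = L c" by (simp add: L_def)
  with c show ?thesis by simp
qed

lemma eta_basis_contract:
  "linear f \<Longrightarrow> (\<Sum>j\<in>UNIV. (eps j * eta (b j) u) * f (b j)) = (f u :: real)"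
  by (subst (2) eta_basis_expansion) (simp add: linear_sum linear_scale)

lemma eta_nondegenerate: "(\<And>y. eta y v = eta y w) \<Longrightarrow> v = w"
  by (subst eta_basis_expansion, subst (2) eta_basis_expansion) simp

lemma Lam_apply: "Lam eta x y *v z = eta y z *\<^sub>R x - eta x z *\<^sub>R y"
proof -
  have "linear (\<lambda>z. eta y z *\<^sub>R x - eta x z *\<^sub>R y)"
    by (rule linearI) (simp_all add: algebra_simps)
  then show ?thesis unfolding Lam_def by (rule matrix_works_real)
qed

lemma bilinear_Lam: "bilinear (Lam eta)"
  unfolding bilinear_def
  by (auto intro!: linearI matrix_eqI simp: Lam_apply algebra_simps)

lemmas Lam_simps =
  bilinear_ladd[OF bilinear_Lam] bilinear_radd[OF bilinear_Lam]
  bilinear_lsub[OF bilinear_Lam] bilinear_rsub[OF bilinear_Lam]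
  bilinear_lmul[OF bilinear_Lam] bilinear_rmul[OF bilinear_Lam]
  bilinear_lzero[OF bilinear_Lam]

lemma Lam_antisym: "Lam eta y x = - Lam eta x y"
  by (rule matrix_eqI) (simp add: Lam_apply)

lemma so_alg_iff: "X \<in> so_alg eta \<longleftrightarrow> (\<forall>x y. eta (X *v x) y = - eta x (X *v y))"
  by (auto simp: so_alg_def eq_neg_iff_add_eq_0)

lemma so_algD: "X \<in> so_alg eta \<Longrightarrow> eta (X *v x) y = - eta x (X *v y)"
  by (simp add: so_alg_iff)

lemma so_algI: "(\<And>x y. eta (X *v x) y = - eta x (X *v y)) \<Longrightarrow> X \<in> so_alg eta"
  by (simp add: so_alg_iff)

lemma so_alg_isotropic: "X \<in> so_alg eta \<Longrightarrow> eta (X *v x) x = 0"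
  using so_algD[of X x x] eta_sym[of "X *v x" x] by simp

lemma subspace_so_alg: "subspace (so_alg eta)"
proof -
  have "X + Y \<in> so_alg eta" if "X \<in> so_alg eta" "Y \<in> so_alg eta" for X Y
    using that by (intro so_algI) (simp add: so_algD)
  moreover have "c *\<^sub>R X \<in> so_alg eta" if "X \<in> so_alg eta" for c X
    using that by (intro so_algI) (simp add: so_algD)
  moreover have "0 \<in> so_alg eta" by (rule so_algI) simp
  ultimately show ?thesis by (simp add: subspace_def)
qed

lemma Lam_in_so_alg: "Lam eta x y \<in> so_alg eta"
  by (rule so_algI) (simp add: Lam_apply algebra_simps eta_sym)

definition adj :: "'n mat \<Rightarrow> 'n mat" where
  "adj a = matrix (\<lambda>x. \<Sum>j\<in>UNIV. (eps j * eta (a *v b j) x) *\<^sub>R b j)"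

lemma eta_adj_left: "eta (adj a *v x) y = eta x (a *v y)"
proof -
  have "linear (\<lambda>x. \<Sum>j\<in>UNIV. (eps j * eta (a *v b j) x) *\<^sub>R b j)"
    by (rule linearI) (simp_all add: algebra_simps sum.distrib scaleR_sum_right)
  then have "eta (adj a *v x) y = (\<Sum>j\<in>UNIV. (eps j * eta (b j) y) * eta (a *v b j) x)"
    unfolding adj_def by (simp add: matrix_works_real eta_sum_left mult_ac)
  also have "\<dots> = eta (a *v y) x"
    by (rule eta_basis_contract) (rule linearI; simp)
  finally show ?thesis by (simp add: eta_sym)
qed

lemma eta_adj_right: "eta x (adj a *v y) = eta (a *v x) y"
  using eta_adj_left[of a y x] eta_sym by simp

lemma adj_unique: "(\<And>x y. eta (M *v x) y = eta x (a *v y)) \<Longrightarrow> M = adj a"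
  by (rule matrix_eqI, rule eta_nondegenerate) (metis eta_adj_left eta_sym)

lemma linear_adj: "linear adj"
  by (rule linearI; rule adj_unique[symmetric]) (simp_all add: eta_adj_left)

lemma adj_mult: "adj (A ** B) = adj B ** adj A"
  by (rule adj_unique[symmetric]) (simp add: eta_adj_left)

lemma adj_so_alg: "X \<in> so_alg eta \<Longrightarrow> adj X = - X"
  by (rule adj_unique[symmetric]) (simp add: so_algD)

lemma adj_mult_O_grp: "g \<in> O_grp eta \<Longrightarrow> adj g ** g = mat 1"
  by (rule matrix_eqI, rule eta_nondegenerate) (simp add: eta_sym eta_adj_right O_grp_def)

lemma mult_adj_O_grp: "g \<in> O_grp eta \<Longrightarrow> g ** adj g = mat 1"
  using adj_mult_O_grp matrix_left_right_inverse by blast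

lemma matrix_inv_O_grp:
  assumes "g \<in> O_grp eta" shows "matrix_inv g = adj g"
proof -
  have "\<exists>A'. g ** A' = mat 1 \<and> A' ** g = mat 1"
    using adj_mult_O_grp[OF assms] mult_adj_O_grp[OF assms] by blast
  then have "g ** matrix_inv g = mat 1" unfolding matrix_inv_def by (rule someI_ex[THEN conjunct1])
  then have "adj g = (adj g ** g) ** matrix_inv g" by (metis matrix_mul_assoc matrix_mul_rid)
  then show ?thesis by (metis adj_mult_O_grp[OF assms] matrix_mul_lid)
qed

lemma adj_apply_O_grp: "g \<in> O_grp eta \<Longrightarrow> adj g *v (g *v x) = x"
  by (simp add: adj_mult_O_grp matrix_vector_mul_assoc)

lemma apply_adj_O_grp: "g \<in> O_grp eta \<Longrightarrow> g *v (adj g *v x) = x"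
  by (simp add: mult_adj_O_grp matrix_vector_mul_assoc)

lemma adj_in_O_grp: assumes "g \<in> O_grp eta" shows "adj g \<in> O_grp eta"
  using apply_adj_O_grp[OF assms] by (simp add: O_grp_def eta_adj_left)

lemma ad_O_grp: "g \<in> O_grp eta \<Longrightarrow> ad g X = g ** X ** adj g"
  by (simp add: ad_def matrix_inv_O_grp)

lemma ad_Lam: "g \<in> O_grp eta \<Longrightarrow> ad g (Lam eta x y) = Lam eta (g *v x) (g *v y)"
  by (rule matrix_eqI) (simp add: ad_O_grp Lam_apply eta_adj_right)

lemma ad_in_so_alg:
  assumes g: "g \<in> O_grp eta" and X: "X \<in> so_alg eta" shows "ad g X \<in> so_alg eta"
proof (rule so_algI)
  fix x y
  have "eta (ad g X *v x) y = eta (X *v (adj g *v x)) (adj g *v y)"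
    by (simp add: ad_O_grp[OF g] flip: eta_adj_right)
  also have "\<dots> = - eta (adj g *v x) (X *v (adj g *v y))" by (rule so_algD[OF X])
  also have "\<dots> = - eta x (ad g X *v y)" by (simp add: eta_adj_left ad_O_grp[OF g])
  finally show "eta (ad g X *v x) y = - eta x (ad g X *v y)" .
qed

lemma linear_ad: "linear (ad (g::'n mat))"
proof -
  have "linear (\<lambda>X. g ** X)" "linear (\<lambda>X. X ** matrix_inv g)"
    using bilinear_matrix_matrix_mult unfolding bilinear_def by blast+
  then show ?thesis
    unfolding ad_def using linear_compose[of "\<lambda>X. g ** X" "\<lambda>X. X ** matrix_inv g"] by (simp add: o_def)
qed

lemma linear_eta_mult_left: "linear (\<lambda>w. eta (M *v w) v)"
  by (rule linearI) simp_all

lemma linear_eta_mult_right: "linear (\<lambda>w. eta v (M *v w))"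
  by (rule linearI) simp_all

lemma kform_exists: "\<exists>B. bilinear B \<and> (\<forall>x y z t.
      B (Lam eta x y) (Lam eta z t) = eta x t * eta y z - eta x z * eta y t)"
proof (intro exI conjI allI)
  \<comment> \<open>half the trace form\<close>
  define B :: "'n mat \<Rightarrow> 'n mat \<Rightarrow> real"
    where "B X Y = (1/2) * (\<Sum>j\<in>UNIV. eps j * eta (b j) (X *v (Y *v b j)))" for X Y
  show "bilinear B"
    unfolding bilinear_def B_def
    by (auto intro!: linearI simp: sum.distrib algebra_simps sum_distrib_left add_divide_distrib)
  fix x y z t
  have B_Lam: "B (Lam eta x y) Y = (1/2) * (eta y (Y *v x) - eta x (Y *v y))" for Y
  proof -
    have "B (Lam eta x y) Y = (1/2) * ((\<Sum>j\<in>UNIV. (eps j * eta (b j) x) * eta y (Y *v b j))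
       - (\<Sum>j\<in>UNIV. (eps j * eta (b j) y) * eta x (Y *v b j)))"
      unfolding B_def by (simp add: Lam_apply algebra_simps sum_subtractf eta_sym)
    then show ?thesis by (simp only: eta_basis_contract[OF linear_eta_mult_right])
  qed
  show "B (Lam eta x y) (Lam eta z t) = eta x t * eta y z - eta x z * eta y t"
    unfolding B_Lam by (simp add: Lam_apply algebra_simps eta_sym)
qed

lemma bilinear_kform: "bilinear (kform eta)"
  and kform_Lam_Lam: "kform eta (Lam eta x y) (Lam eta z t) = eta x t * eta y z - eta x z * eta y t"
  using someI_ex[OF kform_exists] unfolding kform_def[symmetric] by blast+

lemmas kform_simps [simp] =
  bilinear_ladd[OF bilinear_kform] bilinear_radd[OF bilinear_kform]
  bilinear_lsub[OF bilinear_kform] bilinear_rsub[OF bilinear_kform]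
  bilinear_lmul[OF bilinear_kform] bilinear_rmul[OF bilinear_kform]
  bilinear_lneg[OF bilinear_kform] bilinear_rneg[OF bilinear_kform]
  bilinear_lzero[OF bilinear_kform] bilinear_rzero[OF bilinear_kform]

lemma kform_sum_left: "kform eta (\<Sum>i\<in>S. f i) X = (\<Sum>i\<in>S. kform eta (f i) X)"
  using linear_sum[of "\<lambda>Y. kform eta Y X"] bilinear_kform by (simp add: bilinear_def)

lemma kform_sum_right: "kform eta X (\<Sum>i\<in>S. f i) = (\<Sum>i\<in>S. kform eta X (f i))"
  using linear_sum[of "kform eta X"] bilinear_kform by (simp add: bilinear_def)

lemma so_alg_Lam_expansion:
  assumes "X \<in> so_alg eta"
  shows "X = (1/2) *\<^sub>R (\<Sum>j\<in>UNIV. eps j *\<^sub>R Lam eta (X *v b j) (b j))"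
proof (rule matrix_eqI)
  fix w
  have "(\<Sum>j\<in>UNIV. eps j *\<^sub>R Lam eta (X *v b j) (b j)) *v w
      = (\<Sum>j\<in>UNIV. (eps j * eta (b j) w) *\<^sub>R (X *v b j)) - (\<Sum>j\<in>UNIV. (eps j * eta (X *v b j) w) *\<^sub>R b j)"
    by (simp add: matrix_vector_mult_sum_left Lam_apply algebra_simps sum_subtractf eta_sym)
  also have "(\<Sum>j\<in>UNIV. (eps j * eta (b j) w) *\<^sub>R (X *v b j)) = X *v w"
    by (subst (2) eta_basis_expansion) (simp add: linear_sum[OF matrix_vector_mul_linear])
  also have "(\<Sum>j\<in>UNIV. (eps j * eta (X *v b j) w) *\<^sub>R b j) = - (X *v w)"
    by (subst (2) eta_basis_expansion) (simp add: so_algD[OF assms])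
  finally show "X *v w = ((1/2) *\<^sub>R (\<Sum>j\<in>UNIV. eps j *\<^sub>R Lam eta (X *v b j) (b j))) *v w"
    by simp
qed

lemma kform_Lam_right:
  assumes "X \<in> so_alg eta" shows "kform eta X (Lam eta x y) = eta y (X *v x)"
proof -
  have "kform eta X (Lam eta x y) = (1/2) * ((\<Sum>j\<in>UNIV. (eps j * eta (b j) x) * eta (X *v b j) y)
       - (\<Sum>j\<in>UNIV. (eps j * eta (b j) y) * eta (X *v b j) x))"
    by (subst so_alg_Lam_expansion[OF assms])
      (simp add: kform_sum_left kform_Lam_Lam algebra_simps sum_subtractf eta_sym)
  also have "\<dots> = (1/2) * (eta (X *v x) y - eta (X *v y) x)"
    by (simp only: eta_basis_contract[OF linear_eta_mult_left])
  finally show ?thesis using so_algD[OF assms, of y x] eta_sym[of "X *v x" y] by simp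
qed

lemma kform_Lam_left:
  assumes "Y \<in> so_alg eta" shows "kform eta (Lam eta x y) Y = eta y (Y *v x)"
proof -
  have "kform eta (Lam eta x y) Y = (1/2) * ((\<Sum>j\<in>UNIV. (eps j * eta (b j) x) * eta y (Y *v b j))
       - (\<Sum>j\<in>UNIV. (eps j * eta (b j) y) * eta x (Y *v b j)))"
    by (subst so_alg_Lam_expansion[OF assms])
      (simp add: kform_sum_right kform_Lam_Lam algebra_simps sum_subtractf eta_sym)
  also have "\<dots> = (1/2) * (eta y (Y *v x) - eta x (Y *v y))"
    by (simp only: eta_basis_contract[OF linear_eta_mult_right])
  finally show ?thesis using so_algD[OF assms, of y x] eta_sym[of "Y *v y" x] by simp
qed

lemma additive_on_so_alg_sum:
  assumes add: "\<And>X Y. X \<in> so_alg eta \<Longrightarrow> Y \<in> so_alg eta \<Longrightarrow> phi (X + Y) = phi X + phi Y"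
    and scale: "\<And>c X. X \<in> so_alg eta \<Longrightarrow> phi (c *\<^sub>R X) = c * phi X"
    and "finite S" and "\<And>i. i \<in> S \<Longrightarrow> X i \<in> so_alg eta"
  shows "phi (\<Sum>i\<in>S. X i) = (\<Sum>i\<in>S. phi (X i))"
  using assms(3,4)
proof (induction S rule: finite_induct)
  case empty
  then show ?case using scale[of 0 0] subspace_0[OF subspace_so_alg] by simp
next
  case (insert x F)
  then show ?case by (simp add: add subspace_sum[OF subspace_so_alg])
qed

lemma kform_eq_on_so_alg:
  assumes M: "M \<in> so_alg eta"
    and add: "\<And>X Y. X \<in> so_alg eta \<Longrightarrow> Y \<in> so_alg eta \<Longrightarrow> phi (X + Y) = phi X + phi Y"
    and scale: "\<And>c X. X \<in> so_alg eta \<Longrightarrow> phi (c *\<^sub>R X) = c * phi X"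
    and on_Lam: "\<And>x y. kform eta M (Lam eta x y) = phi (Lam eta x y)"
    and Y: "Y \<in> so_alg eta"
  shows "kform eta M Y = phi Y"
proof -
  define Z where "Z = (\<Sum>j\<in>UNIV. eps j *\<^sub>R Lam eta (Y *v b j) (b j))"
  have terms: "eps j *\<^sub>R Lam eta (Y *v b j) (b j) \<in> so_alg eta" for j
    by (rule subspace_scale[OF subspace_so_alg Lam_in_so_alg])
  have "kform eta M Z = phi Z"
    unfolding Z_def kform_sum_right
    by (simp add: on_Lam scale Lam_in_so_alg additive_on_so_alg_sum[OF add scale finite terms])
  moreover have "Z \<in> so_alg eta"
    unfolding Z_def by (rule subspace_sum[OF subspace_so_alg]) (simp add: terms)
  ultimately show ?thesis
    using so_alg_Lam_expansion[OF Y] scale by (simp add: Z_def[symmetric])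
qed

lemma kdual_apply: "Y \<in> so_alg eta \<Longrightarrow> kdual eta X Y = kform eta X Y"
  by (simp add: kdual_def)

lemma kdual_inj:
  assumes "X \<in> so_alg eta" "X' \<in> so_alg eta" "kdual eta X = kdual eta X'"
  shows "X = X'"
proof (rule matrix_eqI, rule eta_nondegenerate)
  fix x y
  have "kdual eta X (Lam eta x y) = kdual eta X' (Lam eta x y)" using assms(3) by simp
  then show "eta y (X *v x) = eta y (X' *v x)"
    by (simp add: kdual_apply Lam_in_so_alg kform_Lam_right assms(1,2))
qed

lemma kdual_surj:
  assumes phi: "phi \<in> gdual eta"
  shows "\<exists>X \<in> so_alg eta. kdual eta X = phi"
proof -
  have add: "\<And>X Y. X \<in> so_alg eta \<Longrightarrow> Y \<in> so_alg eta \<Longrightarrow> phi (X + Y) = phi X + phi Y"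
    and scale: "\<And>c X. X \<in> so_alg eta \<Longrightarrow> phi (c *\<^sub>R X) = c * phi X"
    and off: "\<And>X. X \<notin> so_alg eta \<Longrightarrow> phi X = 0"
    using phi by (auto simp: gdual_def)
  have bil_phi: "bilinear (\<lambda>x y. phi (Lam eta x y))"
    unfolding bilinear_def
    by (auto intro!: linearI simp: Lam_simps add scale Lam_in_so_alg)
  define X where "X = matrix (\<lambda>x. \<Sum>j\<in>UNIV. (eps j * phi (Lam eta x (b j))) *\<^sub>R b j)"
  have "linear (\<lambda>x. \<Sum>j\<in>UNIV. (eps j * phi (Lam eta x (b j))) *\<^sub>R b j)"
    by (intro linearI)
      (simp_all add: bilinear_ladd[OF bil_phi] bilinear_lmul[OF bil_phi] sum.distrib
        scaleR_sum_right algebra_simps)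
  then have X_expand: "eta y (X *v x) = (\<Sum>j\<in>UNIV. (eps j * eta (b j) y) * phi (Lam eta x (b j)))"
    for x y unfolding X_def by (simp add: matrix_works_real eta_sum_right eta_sym mult_ac)
  have X_Lam: "eta y (X *v x) = phi (Lam eta x y)" for x y
  proof -
    have "linear (\<lambda>y. phi (Lam eta x y))" using bil_phi by (simp add: bilinear_def)
    from eta_basis_contract[OF this] show ?thesis by (simp add: X_expand)
  qed
  have X_so: "X \<in> so_alg eta"
  proof (rule so_algI)
    fix x y
    have "phi (Lam eta y x) = - phi (Lam eta x y)"
      using scale[OF Lam_in_so_alg, of "-1" x y] by (simp add: Lam_antisym[of y x])
    then show "eta (X *v x) y = - eta x (X *v y)" by (simp add: eta_sym[of "X *v x"] X_Lam)
  qed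
  have "kdual eta X Y = phi Y" for Y
  proof (cases "Y \<in> so_alg eta")
    case True
    then show ?thesis
      by (simp add: kdual_apply kform_eq_on_so_alg[OF X_so add scale] kform_Lam_right X_so X_Lam)
  qed (simp add: kdual_def off)
  with X_so show ?thesis by blast
qed

lemma kinv_eq: "X \<in> so_alg eta \<Longrightarrow> kdual eta X = phi \<Longrightarrow> kinv eta phi = X"
  unfolding kinv_def by (rule the_equality) (auto intro: kdual_inj)

lemma kinv_in_so_alg: "phi \<in> gdual eta \<Longrightarrow> kinv eta phi \<in> so_alg eta"
  and kdual_kinv: "phi \<in> gdual eta \<Longrightarrow> kdual eta (kinv eta phi) = phi"
  using kdual_surj kinv_eq by metis+

lemma gdual_apply: "phi \<in> gdual eta \<Longrightarrow> Y \<in> so_alg eta \<Longrightarrow> phi Y = kform eta (kinv eta phi) Y"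
  by (metis kdual_apply kdual_kinv)

lemma kinv_adsharp:
  assumes a: "a \<in> O_grp eta" and psi: "psi \<in> gdual eta"
  shows "kinv eta (adsharp eta a psi) = ad a (kinv eta psi)"
proof (rule kinv_eq)
  define P where "P = kinv eta psi"
  have P: "P \<in> so_alg eta" unfolding P_def by (rule kinv_in_so_alg[OF psi])
  show so: "ad a P \<in> so_alg eta" by (rule ad_in_so_alg[OF a P])
  have a': "adj a \<in> O_grp eta" by (rule adj_in_O_grp[OF a])
  have "kform eta (ad a P) Y = kform eta P (ad (adj a) Y)" if Y: "Y \<in> so_alg eta" for Y
  proof (rule kform_eq_on_so_alg[OF so _ _ _ Y])
    fix x y
    have "kform eta (ad a P) (Lam eta x y) = eta (adj a *v y) (P *v (adj a *v x))"
      by (simp only: kform_Lam_right[OF so]) (simp add: ad_O_grp[OF a] eta_adj_left)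
    also have "\<dots> = kform eta P (ad (adj a) (Lam eta x y))"
      by (simp only: ad_Lam[OF a'] kform_Lam_right[OF P])
    finally show "kform eta (ad a P) (Lam eta x y) = kform eta P (ad (adj a) (Lam eta x y))" .
  qed (simp_all add: linear_add[OF linear_ad] linear_scale[OF linear_ad])
  then show "kdual eta (ad a P) = adsharp eta a psi"
    by (auto simp: kdual_def adsharp_def matrix_inv_O_grp[OF a] gdual_apply[OF psi]
        ad_in_so_alg[OF a'] P_def)
qed

lemma kdual_in_gdual: "kdual eta X \<in> gdual eta"
  by (auto simp: gdual_def kdual_def subspace_add[OF subspace_so_alg] subspace_scale[OF subspace_so_alg])

lemma polynomial_function_adj: "polynomial_function F \<Longrightarrow> polynomial_function (\<lambda>x. adj (F x))"
  using polynomial_function_compose[OF _ polynomial_function_linear[OF linear_adj]]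
  by (simp add: o_def)

lemma real_polynomial_function_eta:
  "polynomial_function F \<Longrightarrow> polynomial_function G \<Longrightarrow> real_polynomial_function (\<lambda>x. eta (F x) (G x))"
  by (simp add: real_polynomial_function_eq polynomial_function_bilinear[OF bil])

lemma lie_br_Lam_isotropic:
  assumes "eta f f = 0"
  shows "lie_br (Lam eta x f) (Lam eta y f) = Lam eta (eta f y *\<^sub>R x - eta f x *\<^sub>R y) f"
  by (rule matrix_eqI)
    (simp add: lie_br_def Lam_apply algebra_simps assms eta_sym[of x f] eta_sym[of y f] eta_sym[of y x])

end

section \<open>The frame \<open>s, t\<close>\<close>

locale lorentz_frame = pseudo_euclidean eta b for eta :: "real^'n::finite \<Rightarrow> real^'n \<Rightarrow> real" and b +
  fixes s t :: "real^'n"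
  assumes s_sq: "eta s s = -1" and t_sq: "eta t t = 1" and s_t: "eta s t = 0"
begin

abbreviation fnull :: "real^'n" where "fnull \<equiv> t - s"

lemma t_s: "eta t s = 0"
  using s_t eta_sym[of t s] by simp

lemma fnull_simps [simp]: "eta fnull s = 1" "eta s fnull = 1" "eta fnull fnull = 0"
  "eta t fnull = 1" "eta fnull t = 1"
  using s_sq t_sq s_t t_s by simp_all

definition proj_s :: "real^'n \<Rightarrow> real^'n" where "proj_s x = x + eta x s *\<^sub>R s"

lemma proj_s_orth [simp]: "eta (proj_s x) s = 0"
  by (simp add: proj_s_def s_sq)

lemma proj_s_id: "eta x s = 0 \<Longrightarrow> proj_s x = x"
  by (simp add: proj_s_def)

lemma linear_proj_s: "linear proj_s"
  unfolding proj_s_def by (rule linearI) (simp_all add: algebra_simps)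

lemma Lam_fnull_apply_s: "eta x s = 0 \<Longrightarrow> Lam eta x fnull *v s = x"
  by (simp add: Lam_apply t_s s_sq)

lemma c_alg_eq: "c_alg eta s t = {Lam eta x fnull | x. eta x s = 0}"
proof -
  have "subspace {Lam eta x fnull | x. eta x s = 0}"
  proof (unfold subspace_def, intro conjI ballI allI)
    show "0 \<in> {Lam eta x fnull | x. eta x s = 0}"
      by (intro CollectI exI[of _ 0]) (simp add: bilinear_lzero[OF bilinear_Lam])
  next
    fix X Y assume "X \<in> {Lam eta x fnull | x. eta x s = 0}" "Y \<in> {Lam eta x fnull | x. eta x s = 0}"
    then obtain x y where "X = Lam eta x fnull" "eta x s = 0" "Y = Lam eta y fnull" "eta y s = 0"
      by blast
    then show "X + Y \<in> {Lam eta x fnull | x. eta x s = 0}"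
      by (intro CollectI exI[of _ "x + y"]) (simp add: bilinear_ladd[OF bilinear_Lam])
  next
    fix c X assume "X \<in> {Lam eta x fnull | x. eta x s = 0}"
    then obtain x where "X = Lam eta x fnull" "eta x s = 0" by blast
    then show "c *\<^sub>R X \<in> {Lam eta x fnull | x. eta x s = 0}"
      by (intro CollectI exI[of _ "c *\<^sub>R x"]) (simp add: bilinear_lmul[OF bilinear_Lam])
  qed
  then show ?thesis unfolding c_alg_def by (simp add: span_eq_iff eta_sym)
qed

lemma Lam_fnull_in_c_alg: "eta x s = 0 \<Longrightarrow> Lam eta x fnull \<in> c_alg eta s t"
  by (auto simp: c_alg_eq)

lemma c_alg_subset_so_alg: "c_alg eta s t \<subseteq> so_alg eta"
  by (auto simp: c_alg_eq Lam_in_so_alg)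

lemma so_alg_minus_Lam_in_a_alg:
  "Y \<in> so_alg eta \<Longrightarrow> Y - Lam eta (Y *v s) fnull \<in> a_alg eta s"
  by (simp add: a_alg_def subspace_diff[OF subspace_so_alg] Lam_in_so_alg Lam_fnull_apply_s
      so_alg_isotropic)

lemma Pa_eq:
  assumes X: "X \<in> so_alg eta" shows "Pa eta s t X = X - Lam eta (X *v s) fnull"
  unfolding Pa_def
proof (rule the_equality)
  show "X - Lam eta (X *v s) fnull \<in> a_alg eta s \<and> X - (X - Lam eta (X *v s) fnull) \<in> c_alg eta s t"
    using so_alg_minus_Lam_in_a_alg[OF X] Lam_fnull_in_c_alg[OF so_alg_isotropic[OF X]] by simp
  fix Y assume Y: "Y \<in> a_alg eta s \<and> X - Y \<in> c_alg eta s t"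
  then obtain x where x: "X - Y = Lam eta x fnull" "eta x s = 0" unfolding c_alg_eq by blast
  have "Lam eta x fnull *v s = X *v s - Y *v s"
    using x(1) by (metis matrix_vector_mult_diff_rdistrib)
  then have "x = X *v s" using Y Lam_fnull_apply_s[OF x(2)] by (simp add: a_alg_def)
  with x show "Y = X - Lam eta (X *v s) fnull" by (simp add: algebra_simps)
qed

lemma kform_kinv_ann:
  assumes phi: "phi \<in> ann eta s" and Y: "Y \<in> so_alg eta"
  shows "kform eta (kinv eta phi) Y = eta (Y *v s) (kinv eta phi *v s)"
proof -
  define C where "C = kinv eta phi"
  have C: "C \<in> so_alg eta"
    using phi by (simp add: ann_def C_def kinv_in_so_alg)
  have C_a: "kform eta C Z = 0" if "Z \<in> a_alg eta s" for Z
    using that phi gdual_apply[of phi Z] by (auto simp: ann_def a_alg_def C_def)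
  have Ys: "eta (Y *v s) s = 0" by (rule so_alg_isotropic[OF Y])
  have "Lam eta t (Y *v s) \<in> a_alg eta s"
    using Ys t_s by (simp add: a_alg_def Lam_in_so_alg Lam_apply)
  then have Ct: "eta (C *v t) (Y *v s) = 0"
    using C_a kform_Lam_right[OF C, of t "Y *v s"] eta_sym by simp
  have "kform eta C Y = kform eta C (Y - Lam eta (Y *v s) fnull) + kform eta C (Lam eta (Y *v s) fnull)"
    by simp
  also have "\<dots> = - eta (C *v fnull) (Y *v s)"
    using C_a[OF so_alg_minus_Lam_in_a_alg[OF Y]] kform_Lam_right[OF C] so_algD[OF C] by simp
  also have "\<dots> = eta (Y *v s) (C *v s)"
    using Ct eta_sym by simp
  finally show ?thesis unfolding C_def .
qed

definition ann_vec :: "'n dual \<Rightarrow> real^'n" where "ann_vec phi = kinv eta phi *v s"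

lemma ann_apply:
  "phi \<in> ann eta s \<Longrightarrow> Y \<in> so_alg eta \<Longrightarrow> phi Y = eta (Y *v s) (ann_vec phi)"
  by (simp add: ann_vec_def ann_def gdual_apply kform_kinv_ann)

lemma ann_vec_orth: "phi \<in> ann eta s \<Longrightarrow> eta (ann_vec phi) s = 0"
  by (simp add: ann_vec_def ann_def kinv_in_so_alg so_alg_isotropic)

lemma ktil_ann:
  "phi \<in> ann eta s \<Longrightarrow> psi \<in> ann eta s \<Longrightarrow> ktil eta phi psi = eta (ann_vec psi) (ann_vec phi)"
  by (simp add: ktil_def ann_vec_def kform_kinv_ann ann_def kinv_in_so_alg)

lemma theta_in_ann: "kdual eta (Lam eta t s) \<in> ann eta s"
proof -
  have "kform eta (Lam eta t s) Z = 0" if "Z \<in> a_alg eta s" for Z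
    using that so_algD[of Z s t] by (simp add: a_alg_def kform_Lam_left)
  then show ?thesis using kdual_in_gdual by (auto simp: ann_def kdual_apply a_alg_def)
qed

lemma ann_vec_theta: "ann_vec (kdual eta (Lam eta t s)) = - t"
  by (simp add: ann_vec_def kinv_eq[OF Lam_in_so_alg refl] Lam_apply s_sq t_s)

definition sig :: "'n mat \<Rightarrow> real" where "sig a = - eta (a *v s) s"

lemma linear_sig: "linear sig"
  unfolding sig_def by (rule linearI) simp_all

lemma A_grp_O_grp: "a \<in> A_grp eta s \<Longrightarrow> a \<in> O_grp eta"
  using connected_component_subset unfolding A_grp_def SO0_def by blast

lemma A_grp_apply_s: "a \<in> A_grp eta s \<Longrightarrow> a *v s = sig a *\<^sub>R s"
  by (auto simp: A_grp_def sig_def s_sq)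

lemma sig_cases: "a \<in> A_grp eta s \<Longrightarrow> sig a = 1 \<or> sig a = -1"
  by (auto simp: A_grp_def sig_def s_sq)

lemma sig_sq: "a \<in> A_grp eta s \<Longrightarrow> sig a * sig a = 1"
  by (drule sig_cases) auto

lemma eta_A_grp_s: assumes a: "a \<in> A_grp eta s" shows "eta (a *v y) s = sig a * eta y s"
proof -
  have "eta y s = eta (a *v y) (a *v s)" using A_grp_O_grp[OF a] by (simp add: O_grp_def)
  then show ?thesis using sig_cases[OF a] by (auto simp: A_grp_apply_s[OF a])
qed

lemma adj_A_grp_s: assumes a: "a \<in> A_grp eta s" shows "adj a *v s = sig a *\<^sub>R s"
proof -
  have "s = sig a *\<^sub>R (adj a *v s)"
    using adj_apply_O_grp[OF A_grp_O_grp[OF a], of s] by (simp add: A_grp_apply_s[OF a])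
  then show ?thesis using sig_cases[OF a] by (metis scaleR_minus1_left scaleR_one minus_minus)
qed

lemma Dom_D:
  assumes "(chi, a) \<in> Dom eta s"
  shows "chi \<in> ann eta s" "a \<in> A_grp eta s" "a \<in> O_grp eta"
  using assms A_grp_O_grp by (auto simp: Dom_def)

definition poly_rep :: "('n pt \<Rightarrow> real) \<Rightarrow> ('n mat \<times> 'n mat \<Rightarrow> real) \<Rightarrow> bool" where
  "poly_rep F G \<longleftrightarrow> real_polynomial_function G
     \<and> (\<forall>chi a. (chi, a) \<in> Dom eta s \<longrightarrow> F (chi, a) = G (kinv eta chi, a))
     \<and> (\<forall>z. z \<notin> Dom eta s \<longrightarrow> F z = 0)"

lemma pull_apply: "(chi, a) \<in> Dom eta s \<Longrightarrow> pull eta s f (chi, a) = f a"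
  by (simp add: pull_def)

lemma smooth_A_real_polynomial_function: "real_polynomial_function f \<Longrightarrow> smooth_A eta s f"
  unfolding smooth_A_def using smooth_on_real_polynomial_function by blast

lemma poly_rep_smooth_D: "poly_rep F G \<Longrightarrow> smooth_D eta s F"
  unfolding poly_rep_def smooth_D_def using smooth_on_real_polynomial_function by blast

lemma poly_rep_mult: "poly_rep F G \<Longrightarrow> poly_rep F' G' \<Longrightarrow> poly_rep (\<lambda>w. F w * F' w) (\<lambda>x. G x * G' x)"
  unfolding poly_rep_def by auto

lemma poly_rep_sum:
  "finite S \<Longrightarrow> (\<And>i. i \<in> S \<Longrightarrow> poly_rep (F i) (G i)) \<Longrightarrow>
    poly_rep (\<lambda>w. \<Sum>i\<in>S. F i w) (\<lambda>x. \<Sum>i\<in>S. G i x)"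
  unfolding poly_rep_def by (auto intro!: real_polynomial_function_sum)

lemma poly_rep_pull: "real_polynomial_function f \<Longrightarrow> poly_rep (pull eta s f) (\<lambda>x. f (snd x))"
  unfolding poly_rep_def pull_def
  using real_polynomial_function_compose[of snd f] polynomial_function_bounded_linear[OF bounded_linear_snd]
  by (auto simp: o_def)

lemma XL_apply:
  assumes "(chi, a) \<in> Dom eta s" "p \<in> so_alg eta"
  shows "XL eta s p (chi, a) = eta (ad a p *v s) (ann_vec chi)"
  using assms by (simp add: XL_def ann_apply Dom_D ad_in_so_alg)

lemma poly_rep_XL:
  assumes p: "p \<in> so_alg eta"
  shows "poly_rep (XL eta s p) (\<lambda>x. eta ((snd x ** p ** adj (snd x)) *v s) (fst x *v s))"
proof -
  have "polynomial_function (snd :: 'n mat \<times> 'n mat \<Rightarrow> 'n mat)"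
    "polynomial_function (fst :: 'n mat \<times> 'n mat \<Rightarrow> 'n mat)"
    by (simp_all add: polynomial_function_bounded_linear bounded_linear_fst bounded_linear_snd)
  then have "real_polynomial_function (\<lambda>x. eta ((snd x ** p ** adj (snd x)) *v s) (fst x *v s))"
    by (intro real_polynomial_function_eta polynomial_function_matrix_vector_mult
        polynomial_function_matrix_mult polynomial_function_adj) (auto simp: o_def)
  then show ?thesis
    unfolding poly_rep_def
    by (auto simp: XL_apply[OF _ p] ad_O_grp Dom_D ann_vec_def) (simp add: XL_def)
qed

definition basis_s :: "'n \<Rightarrow> real^'n" where "basis_s i = proj_s (axis i 1)"

definition Lam_basis_s :: "'n \<Rightarrow> 'n mat" where "Lam_basis_s i = Lam eta (basis_s i) fnull"

lemma basis_s_orth [simp]: "eta (basis_s i) s = 0"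
  by (simp add: basis_s_def)

lemma Lam_basis_s_in_c_alg: "Lam_basis_s i \<in> c_alg eta s t"
  unfolding Lam_basis_s_def by (simp add: Lam_fnull_in_c_alg)

lemma sum_basis_s: "linear (L :: real^'n \<Rightarrow> real) \<Longrightarrow> (\<Sum>i\<in>UNIV. u $ i * L (basis_s i)) = L (proj_s u)"
  using linear_component_expansion[OF linear_compose[OF linear_proj_s], of L u]
  by (simp add: o_def basis_s_def)

lemma sum_basis_s_bilinear:
  assumes "bilinear (K :: real^'n \<Rightarrow> real^'n \<Rightarrow> real)"
  shows "(\<Sum>i\<in>UNIV. \<Sum>j\<in>UNIV. U $ i * W $ j * K (basis_s i) (basis_s j)) = K (proj_s U) (proj_s W)"
proof -
  have l1: "linear (\<lambda>x. K x y)" and l2: "linear (K x)" for x y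
    using assms by (simp_all add: bilinear_def)
  have "(\<Sum>i\<in>UNIV. \<Sum>j\<in>UNIV. U $ i * W $ j * K (basis_s i) (basis_s j))
      = (\<Sum>i\<in>UNIV. U $ i * (\<Sum>j\<in>UNIV. W $ j * K (basis_s i) (basis_s j)))"
    by (simp add: sum_distrib_left mult.assoc)
  also have "\<dots> = (\<Sum>i\<in>UNIV. U $ i * K (basis_s i) (proj_s W))" by (simp only: sum_basis_s[OF l2])
  also have "\<dots> = K (proj_s U) (proj_s W)" by (rule sum_basis_s[OF l1])
  finally show ?thesis .
qed

lemma sum_basis_s_linear_linear:
  assumes M: "linear (M :: real^'n \<Rightarrow> real^'n)" and L: "linear (L :: real^'n \<Rightarrow> real)"
  shows "(\<Sum>i\<in>UNIV. \<Sum>j\<in>UNIV. U $ i * L (basis_s j) * M (basis_s i) $ j) = L (proj_s (M (proj_s U)))"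
proof -
  have LM: "linear (\<lambda>x. L (proj_s (M x)))"
    using linear_compose[OF M linear_compose[OF linear_proj_s L]] by (simp add: o_def)
  have "(\<Sum>i\<in>UNIV. \<Sum>j\<in>UNIV. U $ i * L (basis_s j) * M (basis_s i) $ j)
      = (\<Sum>i\<in>UNIV. U $ i * (\<Sum>j\<in>UNIV. M (basis_s i) $ j * L (basis_s j)))"
    by (simp add: sum_distrib_left mult_ac)
  also have "\<dots> = (\<Sum>i\<in>UNIV. U $ i * L (proj_s (M (basis_s i))))" by (simp only: sum_basis_s[OF L])
  also have "\<dots> = L (proj_s (M (proj_s U)))" by (rule sum_basis_s[OF LM])
  finally show ?thesis .
qed

lemma ad_Lam_fnull_apply_s:
  assumes a: "a \<in> A_grp eta s" and x: "eta x s = 0"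
  shows "ad a (Lam eta x fnull) *v s = sig a *\<^sub>R (a *v x)"
  using eta_A_grp_s[OF a, of fnull] eta_A_grp_s[OF a, of x] x
  by (simp add: ad_Lam[OF A_grp_O_grp[OF a]] Lam_apply s_sq t_s)

lemma XL_Lam_fnull:
  assumes z: "(chi, a) \<in> Dom eta s" and x: "eta x s = 0"
  shows "XL eta s (Lam eta x fnull) (chi, a) = sig a * eta (a *v x) (ann_vec chi)"
  using Dom_D[OF z] by (simp add: XL_apply[OF z Lam_in_so_alg] ad_Lam_fnull_apply_s[OF _ x])

\<comment> \<open>\<open>aproj a x\<close> is \<open>P\<^sub>a(ad(a) \<Lambda>\<^sub>x\<^sub>f)\<close>, see \<open>Pa_ad_Lam_fnull\<close>.\<close>
definition aproj :: "'n mat \<Rightarrow> real^'n \<Rightarrow> 'n mat" where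
  "aproj a x = Lam eta (a *v x) (a *v fnull) - Lam eta (sig a *\<^sub>R (a *v x)) fnull"

lemma Pa_ad_Lam_fnull:
  assumes a: "a \<in> A_grp eta s" and x: "eta x s = 0"
  shows "Pa eta s t (ad a (Lam eta x fnull)) = aproj a x"
proof -
  have O: "a \<in> O_grp eta" by (rule A_grp_O_grp[OF a])
  have "Pa eta s t (ad a (Lam eta x fnull)) = ad a (Lam eta x fnull) - Lam eta (ad a (Lam eta x fnull) *v s) fnull"
    by (rule Pa_eq[OF ad_in_so_alg[OF O Lam_in_so_alg]])
  then show ?thesis unfolding ad_Lam_fnull_apply_s[OF a x] by (simp only: ad_Lam[OF O] aproj_def)
qed

lemma PiL_Lam_fnull:
  assumes "a \<in> A_grp eta s" "eta x s = 0" "(g has_derivative Dg) (at a)"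
  shows "PiL eta s t (Lam eta x fnull) g a = Dg (aproj a x ** a)"
  unfolding PiL_def Pa_ad_Lam_fnull[OF assms(1,2)] by (rule deriv_mexp_curve[OF assms(3)])

lemma lie_br_Lam_fnull:
  "lie_br (Lam eta x fnull) (Lam eta y fnull) = Lam eta (eta fnull y *\<^sub>R x - eta fnull x *\<^sub>R y) fnull"
  using fnull_simps(3) by (rule lie_br_Lam_isotropic)

lemma linear_aproj: "linear (aproj a)"
  by (rule linearI) (simp_all add: aproj_def Lam_simps algebra_simps)

lemma linear_aproj_mult: "linear D \<Longrightarrow> linear (\<lambda>x. D (aproj a x ** a))"
  by (rule linearI)
    (simp_all add: linear_add linear_scale linear_add[OF linear_aproj] linear_scale[OF linear_aproj]
      bilinear_ladd[OF bilinear_matrix_matrix_mult] bilinear_lmul[OF bilinear_matrix_matrix_mult])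

definition XL_comb :: "('n mat \<Rightarrow> real^'n) \<Rightarrow> 'n pt \<Rightarrow> real" where
  "XL_comb u = (\<lambda>w. \<Sum>i\<in>UNIV. pull eta s (\<lambda>a. u a $ i) w * XL eta s (Lam_basis_s i) w)"

lemma real_polynomial_function_component:
  "polynomial_function u \<Longrightarrow> real_polynomial_function (\<lambda>a. u a $ i)"
  using polynomial_function_compose[OF _ polynomial_function_bounded_linear[OF bounded_linear_vec_nth]]
  by (simp add: real_polynomial_function_eq o_def)

lemma poly_rep_XL_comb_term:
  "polynomial_function u \<Longrightarrow> poly_rep (\<lambda>w. pull eta s (\<lambda>a. u a $ i) w * XL eta s (Lam_basis_s i) w)
     (\<lambda>x. u (snd x) $ i * eta ((snd x ** Lam_basis_s i ** adj (snd x)) *v s) (fst x *v s))"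
  by (intro poly_rep_mult poly_rep_pull poly_rep_XL real_polynomial_function_component)
    (simp_all add: Lam_basis_s_def Lam_in_so_alg)

definition lie_form :: "'n mat \<Rightarrow> real^'n \<Rightarrow> real^'n \<Rightarrow> real^'n \<Rightarrow> real" where
  "lie_form a c x y = sig a * (eta fnull y * eta (a *v x) c - eta fnull x * eta (a *v y) c)"

lemma bilinear_lie_form: "bilinear (lie_form a c)"
  unfolding bilinear_def lie_form_def by (auto intro!: linearI simp: algebra_simps)

lemma XL_lie_br_Lam_fnull:
  assumes z: "(chi, a) \<in> Dom eta s" and "eta x s = 0" "eta y s = 0"
  shows "XL eta s (lie_br (Lam eta y fnull) (Lam eta x fnull)) (chi, a) = - lie_form a (ann_vec chi) x y"
  using assms by (simp add: lie_br_Lam_fnull XL_Lam_fnull lie_form_def algebra_simps)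

definition ann_coeff :: "real^'n \<Rightarrow> 'n mat \<Rightarrow> real^'n" where
  "ann_coeff v a = sig a *\<^sub>R (adj a *v v)"

definition kt2_fun :: "real^'n \<Rightarrow> real^'n \<Rightarrow> 'n mat \<Rightarrow> real" where
  "kt2_fun p q a = sig a * eta (a *v q) p"

lemma linear_adj_apply: "linear (\<lambda>a. adj a *v v)"
  by (rule linearI) (simp_all add: linear_add[OF linear_adj] linear_scale[OF linear_adj])

lemma linear_eta_apply: "linear (\<lambda>a::'n mat. eta (a *v q) p)"
  by (rule linearI) simp_all

lemma has_derivative_ann_coeff:
  "(ann_coeff v has_derivative (\<lambda>h. sig a *\<^sub>R (adj h *v v) + sig h *\<^sub>R (adj a *v v))) (at a)"
  unfolding ann_coeff_def[abs_def]
  using has_derivative_scaleR[OF linear_imp_has_derivative[OF linear_sig] linear_imp_has_derivative[OF linear_adj_apply]]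
  by simp

lemma has_derivative_kt2_fun:
  "(kt2_fun p q has_derivative (\<lambda>h. sig a * eta (h *v q) p + sig h * eta (a *v q) p)) (at a)"
  unfolding kt2_fun_def[abs_def]
  using has_derivative_mult[OF linear_imp_has_derivative[OF linear_sig] linear_imp_has_derivative[OF linear_eta_apply]]
  by simp

lemma polynomial_function_ann_coeff: "polynomial_function (ann_coeff v)"
  unfolding ann_coeff_def[abs_def]
  by (intro polynomial_function_mult polynomial_function_linear linear_sig linear_adj_apply)

lemma real_polynomial_function_kt2_fun: "real_polynomial_function (kt2_fun p q)"
proof -
  have "real_polynomial_function sig"
    using linear_sig by (intro real_polynomial_function.intros(1)) (simp add: linear_conv_bounded_linear)
  moreover have "real_polynomial_function (\<lambda>a::'n mat. eta (a *v q) p)"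
    using linear_eta_apply by (intro real_polynomial_function.intros(1)) (simp add: linear_conv_bounded_linear)
  ultimately show ?thesis
    unfolding kt2_fun_def[abs_def] by (rule real_polynomial_function.intros(4))
qed

lemma ann_coeff_orth:
  assumes "a \<in> A_grp eta s" "eta v s = 0" shows "eta (ann_coeff v a) s = 0"
  using assms by (simp add: ann_coeff_def eta_adj_left A_grp_apply_s)

lemma apply_ann_coeff: "a \<in> A_grp eta s \<Longrightarrow> a *v ann_coeff v a = sig a *\<^sub>R v"
  by (simp add: ann_coeff_def apply_adj_O_grp A_grp_O_grp)

lemma kt1_eq_XL_comb:
  assumes phi: "phi \<in> ann eta s" shows "kt1 eta s phi = XL_comb (ann_coeff (ann_vec phi))"
proof
  fix z :: "'n pt"
  show "kt1 eta s phi z = XL_comb (ann_coeff (ann_vec phi)) z"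
  proof (cases z)
    case (Pair chi a)
    show ?thesis
    proof (cases "(chi, a) \<in> Dom eta s")
      case z: True
      note a = Dom_D(2)[OF z]
      have "XL_comb (ann_coeff (ann_vec phi)) (chi, a)
          = (\<Sum>i\<in>UNIV. ann_coeff (ann_vec phi) a $ i * (sig a * eta (a *v basis_s i) (ann_vec chi)))"
        unfolding XL_comb_def by (simp add: pull_apply[OF z] Lam_basis_s_def XL_Lam_fnull[OF z])
      also have "\<dots> = sig a * eta (a *v proj_s (ann_coeff (ann_vec phi) a)) (ann_vec chi)"
        by (rule sum_basis_s) (rule linearI, simp_all add: algebra_simps)
      also have "\<dots> = ktil eta phi chi"
        using sig_sq[OF a] ann_coeff_orth[OF a ann_vec_orth[OF phi]] Dom_D(1)[OF z]
        by (simp add: proj_s_id apply_ann_coeff[OF a] ktil_ann phi eta_sym[of "ann_vec phi"]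
            mult.assoc[symmetric])
      finally show ?thesis using z Pair by (simp add: kt1_def)
    qed (simp add: Pair kt1_def XL_comb_def pull_def)
  qed
qed

lemma kt2_eq_pull:
  assumes phi: "phi \<in> ann eta s" and psi: "psi \<in> ann eta s"
  shows "kt2 eta s phi psi = pull eta s (kt2_fun (ann_vec phi) (ann_vec psi))"
proof
  fix z :: "'n pt"
  show "kt2 eta s phi psi z = pull eta s (kt2_fun (ann_vec phi) (ann_vec psi)) z"
  proof (cases z)
    case (Pair chi a)
    show ?thesis
    proof (cases "(chi, a) \<in> Dom eta s")
      case z: True
      note D = Dom_D[OF z]
      have P: "kinv eta psi \<in> so_alg eta" using psi by (simp add: ann_def kinv_in_so_alg)
      have "ktil eta phi (adsharp eta a psi) = kform eta (kinv eta phi) (ad a (kinv eta psi))"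
        using psi by (simp add: ktil_def kinv_adsharp[OF D(3)] ann_def)
      also have "\<dots> = eta (ad a (kinv eta psi) *v s) (ann_vec phi)"
        unfolding ann_vec_def by (rule kform_kinv_ann[OF phi ad_in_so_alg[OF D(3) P]])
      also have "ad a (kinv eta psi) *v s = sig a *\<^sub>R (a *v ann_vec psi)"
        by (simp add: ad_O_grp[OF D(3)] adj_A_grp_s[OF D(2)] ann_vec_def)
      finally show ?thesis using z Pair by (simp add: kt2_def pull_apply kt2_fun_def)
    qed (simp add: Pair kt2_def pull_def)
  qed
qed

lemma kt1_apply:
  "(chi, a) \<in> Dom eta s \<Longrightarrow> phi \<in> ann eta s \<Longrightarrow> kt1 eta s phi (chi, a) = eta (ann_vec chi) (ann_vec phi)"
  by (simp add: kt1_def ktil_ann Dom_D)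

lemma kt2_apply:
  "(chi, a) \<in> Dom eta s \<Longrightarrow> phi \<in> ann eta s \<Longrightarrow> psi \<in> ann eta s \<Longrightarrow>
    kt2 eta s phi psi (chi, a) = sig a * eta (a *v ann_vec psi) (ann_vec phi)"
  by (simp add: kt2_eq_pull pull_apply kt2_fun_def)

lemma lie_form_ann_coeff:
  assumes a: "a \<in> A_grp eta s"
  shows "lie_form a c (ann_coeff v a) (ann_coeff w a)
    = sig a * (eta (a *v fnull) w * eta v c - eta (a *v fnull) v * eta w c)"
proof -
  have "eta fnull (ann_coeff u a) = sig a * eta (a *v fnull) u" for u
    unfolding ann_coeff_def by (simp only: bilinear_rmul[OF bil] eta_adj_right real_scaleR_def)
  then have "lie_form a c (ann_coeff v a) (ann_coeff w a)
      = sig a * (sig a * eta (a *v fnull) w * eta (sig a *\<^sub>R v) c - sig a * eta (a *v fnull) v * eta (sig a *\<^sub>R w) c)"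
    by (simp only: lie_form_def apply_ann_coeff[OF a])
  then show ?thesis using sig_cases[OF a] by (auto simp: algebra_simps)
qed

lemma aproj_apply_s: "a \<in> A_grp eta s \<Longrightarrow> eta x s = 0 \<Longrightarrow> aproj a x *v s = 0"
  using eta_A_grp_s[of a fnull] eta_A_grp_s[of a x] by (simp add: aproj_def Lam_apply s_sq t_s)

lemma aproj_in_so_alg: "aproj a x \<in> so_alg eta"
  unfolding aproj_def by (rule subspace_diff[OF subspace_so_alg Lam_in_so_alg Lam_in_so_alg])

lemma sig_aproj_mult: "a \<in> A_grp eta s \<Longrightarrow> eta x s = 0 \<Longrightarrow> sig (aproj a x ** a) = 0"
  unfolding sig_def[of "aproj a x ** a"] by (simp add: A_grp_apply_s aproj_apply_s)

lemma eta_aproj: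
  assumes a: "a \<in> A_grp eta s" and aU: "a *v U = sig a *\<^sub>R v"
  shows "eta (aproj a U *v y) w = sig a * eta (a *v fnull) y * eta v w - sig a * eta v y * eta (a *v fnull) w
     - eta fnull y * eta v w + eta v y * eta fnull w"
proof -
  have e: "aproj a U *v y = (sig a * eta (a *v fnull) y) *\<^sub>R v - (sig a * eta v y) *\<^sub>R (a *v fnull)
      - ((sig a * sig a) * eta fnull y) *\<^sub>R v + ((sig a * sig a) * eta v y) *\<^sub>R fnull"
    unfolding aproj_def aU by (simp add: Lam_apply algebra_simps eta_sym[of "a *v t"] eta_sym[of "a *v s"])
  show ?thesis unfolding e sig_sq[OF a] by (simp add: algebra_simps)
qed

\<comment> \<open>The argument of \<open>proj_s\<close> is the derivative of \<open>ann_coeff v\<close> at \<open>a\<close> along \<open>aproj a x ** a\<close>.\<close>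
lemma eta_derivative_ann_coeff_aproj:
  assumes a: "a \<in> A_grp eta s" and x: "eta x s = 0" and c: "eta c s = 0"
  shows "sig a * eta (a *v proj_s (sig a *\<^sub>R (adj (aproj a x ** a) *v v) + sig (aproj a x ** a) *\<^sub>R (adj a *v v))) c
     = - eta (aproj a x *v v) c"
proof -
  have derivative: "sig a *\<^sub>R (adj (aproj a x ** a) *v v) + sig (aproj a x ** a) *\<^sub>R (adj a *v v)
      = - (sig a *\<^sub>R (adj a *v (aproj a x *v v)))"
    by (simp add: sig_aproj_mult[OF a x] adj_mult adj_so_alg[OF aproj_in_so_alg])
  have a_proj_adj: "a *v proj_s (adj a *v y) = proj_s y" for y
    using eta_adj_left[of a y s] sig_sq[OF a]
    by (simp add: proj_s_def apply_adj_O_grp[OF A_grp_O_grp[OF a]] A_grp_apply_s[OF a])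
  have "a *v proj_s (- (sig a *\<^sub>R (adj a *v y))) = - (sig a *\<^sub>R proj_s y)" for y
    using linear_neg[OF linear_proj_s] linear_scale[OF linear_proj_s] by (simp add: a_proj_adj)
  then show ?thesis
    using c sig_sq[OF a] unfolding derivative by (simp add: proj_s_def eta_sym[of s c] mult.assoc[symmetric])
qed

end

section \<open>The Poisson bracket\<close>

locale lorentz_bracket = lorentz_frame eta b s t for eta :: "real^'n::finite \<Rightarrow> real^'n \<Rightarrow> real" and b s t +
  fixes br :: "('n pt \<Rightarrow> real) \<Rightarrow> ('n pt \<Rightarrow> real) \<Rightarrow> 'n pt \<Rightarrow> real"
  assumes is_br: "is_poisson_bracket eta s t br"
begin

lemma br_add: "smooth_D eta s F \<Longrightarrow> smooth_D eta s G \<Longrightarrow> smooth_D eta s H \<Longrightarrow> z \<in> Dom eta s \<Longrightarrow>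
    br (\<lambda>w. F w + G w) H z = br F H z + br G H z"
  and br_antisym: "smooth_D eta s F \<Longrightarrow> smooth_D eta s G \<Longrightarrow> z \<in> Dom eta s \<Longrightarrow>
    br F G z = - br G F z"
  and br_Leibniz: "smooth_D eta s F \<Longrightarrow> smooth_D eta s G \<Longrightarrow> smooth_D eta s H \<Longrightarrow> z \<in> Dom eta s \<Longrightarrow>
    br F (\<lambda>w. G w * H w) z = br F G z * H z + G z * br F H z"
  and br_XL_XL: "p \<in> c_alg eta s t \<Longrightarrow> q \<in> c_alg eta s t \<Longrightarrow> z \<in> Dom eta s \<Longrightarrow>
    br (XL eta s p) (XL eta s q) z = XL eta s (lie_br p q) z"
  and br_XL_pull: "p \<in> c_alg eta s t \<Longrightarrow> smooth_A eta s f \<Longrightarrow> z \<in> Dom eta s \<Longrightarrow>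
    br (XL eta s p) (pull eta s f) z = pull eta s (PiL eta s t p f) z"
  and br_pull_pull: "smooth_A eta s f1 \<Longrightarrow> smooth_A eta s f2 \<Longrightarrow> z \<in> Dom eta s \<Longrightarrow>
    br (pull eta s f1) (pull eta s f2) z = 0"
  using is_br unfolding is_poisson_bracket_def by blast+

lemma br_sum_left:
  assumes "finite S" "\<And>i. i \<in> S \<Longrightarrow> poly_rep (F i) (G i)" "smooth_D eta s H" "z \<in> Dom eta s"
  shows "br (\<lambda>w. \<Sum>i\<in>S. F i w) H z = (\<Sum>i\<in>S. br (F i) H z)"
  using assms(1,2)
proof (induction S rule: finite_induct)
  case empty
  have "poly_rep (\<lambda>w. 0) (\<lambda>x. 0)" by (simp add: poly_rep_def real_polynomial_function_eq)
  then have "br (\<lambda>w. 0 + 0) H z = br (\<lambda>w. 0) H z + br (\<lambda>w. 0) H z"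
    using br_add poly_rep_smooth_D assms(3,4) by blast
  then show ?case by simp
next
  case (insert x S)
  then have "br (\<lambda>w. F x w + (\<Sum>i\<in>S. F i w)) H z = br (F x) H z + br (\<lambda>w. \<Sum>i\<in>S. F i w) H z"
    by (intro br_add poly_rep_smooth_D[OF poly_rep_sum] poly_rep_smooth_D assms(3,4)) auto
  with insert show ?case by simp
qed

lemma br_sum_right:
  assumes "finite S" "\<And>i. i \<in> S \<Longrightarrow> poly_rep (F i) (G i)" "poly_rep H K" "z \<in> Dom eta s"
  shows "br H (\<lambda>w. \<Sum>i\<in>S. F i w) z = (\<Sum>i\<in>S. br H (F i) z)"
proof -
  note H = poly_rep_smooth_D[OF assms(3)]
  have "poly_rep (\<lambda>w. \<Sum>i\<in>S. F i w) (\<lambda>x. \<Sum>i\<in>S. G i x)"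
    using assms(1,2) by (rule poly_rep_sum)
  then have "br H (\<lambda>w. \<Sum>i\<in>S. F i w) z = - br (\<lambda>w. \<Sum>i\<in>S. F i w) H z"
    by (intro br_antisym[OF H poly_rep_smooth_D assms(4)])
  also have "\<dots> = (\<Sum>i\<in>S. - br (F i) H z)"
    by (simp add: br_sum_left[OF assms(1,2) H assms(4)] sum_negf)
  also have "\<dots> = (\<Sum>i\<in>S. br H (F i) z)"
    using assms(2) by (intro sum.cong refl) (metis br_antisym[OF H poly_rep_smooth_D assms(4)] minus_minus)
  finally show ?thesis .
qed

context
  fixes p :: "'n mat" and f :: "'n mat \<Rightarrow> real"
  assumes p: "p \<in> c_alg eta s t" and f: "real_polynomial_function f"
begin

private lemma smooth_pull_XL:
  "smooth_D eta s (pull eta s f)" "smooth_D eta s (XL eta s p)"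
  "smooth_D eta s (\<lambda>w. pull eta s f w * XL eta s p w)"
  using poly_rep_pull[OF f] poly_rep_XL c_alg_subset_so_alg p
  by (blast intro: poly_rep_smooth_D poly_rep_mult)+

lemma br_pull_XL_pull:
  assumes h: "real_polynomial_function h" and z: "z \<in> Dom eta s"
  shows "br (\<lambda>w. pull eta s f w * XL eta s p w) (pull eta s h) z
    = pull eta s f z * pull eta s (PiL eta s t p h) z"
proof -
  note sf = smooth_pull_XL and sh = poly_rep_smooth_D[OF poly_rep_pull[OF h]]
  have Af: "smooth_A eta s f" "smooth_A eta s h"
    using f h by (simp_all add: smooth_A_real_polynomial_function)
  have "br (\<lambda>w. pull eta s f w * XL eta s p w) (pull eta s h) z
      = - (br (pull eta s h) (pull eta s f) z * XL eta s p z + pull eta s f z * br (pull eta s h) (XL eta s p) z)"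
    by (simp add: br_antisym[OF sf(3) sh z] br_Leibniz[OF sh sf(1,2) z])
  also have "br (pull eta s h) (pull eta s f) z = 0" by (rule br_pull_pull[OF Af(2,1) z])
  also have "br (pull eta s h) (XL eta s p) z = - pull eta s (PiL eta s t p h) z"
    by (simp add: br_antisym[OF sh sf(2) z] br_XL_pull[OF p Af(2) z])
  finally show ?thesis by simp
qed

lemma br_pull_XL_XL:
  assumes q: "q \<in> c_alg eta s t" and z: "z \<in> Dom eta s"
  shows "br (\<lambda>w. pull eta s f w * XL eta s p w) (XL eta s q) z
    = - (pull eta s (PiL eta s t q f) z * XL eta s p z + pull eta s f z * XL eta s (lie_br q p) z)"
proof -
  note sf = smooth_pull_XL
  have sq: "smooth_D eta s (XL eta s q)"
    using poly_rep_XL c_alg_subset_so_alg q by (blast intro: poly_rep_smooth_D)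
  show ?thesis
    using f by (simp add: br_antisym[OF sf(3) sq z] br_Leibniz[OF sq sf(1,2) z] br_XL_XL[OF q p z]
        br_XL_pull[OF q _ z] smooth_A_real_polynomial_function)
qed

end

lemma br_pull_XL_pull_XL:
  assumes p: "p \<in> c_alg eta s t" and q: "q \<in> c_alg eta s t"
    and f: "real_polynomial_function f" and g: "real_polynomial_function g" and z: "z \<in> Dom eta s"
  shows "br (\<lambda>w. pull eta s f w * XL eta s p w) (\<lambda>w. pull eta s g w * XL eta s q w) z
     = pull eta s f z * pull eta s g z * (- XL eta s (lie_br q p) z)
       + pull eta s f z * XL eta s q z * pull eta s (PiL eta s t p g) z
       - pull eta s g z * XL eta s p z * pull eta s (PiL eta s t q f) z"
proof -
  have "smooth_D eta s (\<lambda>w. pull eta s f w * XL eta s p w)" "smooth_D eta s (pull eta s g)"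
    "smooth_D eta s (XL eta s q)"
    using poly_rep_pull f g poly_rep_XL c_alg_subset_so_alg p q
    by (blast intro: poly_rep_smooth_D poly_rep_mult)+
  then have "br (\<lambda>w. pull eta s f w * XL eta s p w) (\<lambda>w. pull eta s g w * XL eta s q w) z
      = br (\<lambda>w. pull eta s f w * XL eta s p w) (pull eta s g) z * XL eta s q z
        + pull eta s g z * br (\<lambda>w. pull eta s f w * XL eta s p w) (XL eta s q) z"
    using z by (rule br_Leibniz)
  then show ?thesis
    unfolding br_pull_XL_pull[OF p f g z] br_pull_XL_XL[OF p f q z] by (simp add: algebra_simps)
qed

lemma br_XL_comb_pull:
  assumes z: "(chi, a) \<in> Dom eta s" and u: "polynomial_function u"
    and h: "real_polynomial_function h" and Dh: "(h has_derivative Dh) (at a)"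
  shows "br (XL_comb u) (pull eta s h) (chi, a) = Dh (aproj a (proj_s (u a)) ** a)"
proof -
  have "br (XL_comb u) (pull eta s h) (chi, a)
      = (\<Sum>i\<in>UNIV. br (\<lambda>w. pull eta s (\<lambda>a. u a $ i) w * XL eta s (Lam_basis_s i) w) (pull eta s h) (chi, a))"
    unfolding XL_comb_def
    by (rule br_sum_left[OF _ poly_rep_XL_comb_term[OF u] poly_rep_smooth_D[OF poly_rep_pull[OF h]] z]) simp
  also have "\<dots> = (\<Sum>i\<in>UNIV. u a $ i * Dh (aproj a (basis_s i) ** a))"
    using br_pull_XL_pull[OF Lam_basis_s_in_c_alg real_polynomial_function_component[OF u] h z]
      PiL_Lam_fnull[OF Dom_D(2)[OF z] basis_s_orth Dh]
    by (simp add: pull_apply[OF z] Lam_basis_s_def)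
  also have "\<dots> = Dh (aproj a (proj_s (u a)) ** a)"
    using has_derivative_bounded_linear[OF Dh]
    by (intro sum_basis_s linear_aproj_mult bounded_linear.linear)
  finally show ?thesis .
qed

lemma br_XL_comb_terms:
  assumes z: "(chi, a) \<in> Dom eta s" and u: "polynomial_function u" and w: "polynomial_function w"
    and Du: "(u has_derivative Du) (at a)" and Dw: "(w has_derivative Dw) (at a)"
  defines "c \<equiv> ann_vec chi"
  shows "br (\<lambda>v. pull eta s (\<lambda>a. u a $ i) v * XL eta s (Lam_basis_s i) v)
            (\<lambda>v. pull eta s (\<lambda>a. w a $ j) v * XL eta s (Lam_basis_s j) v) (chi, a)
     = u a $ i * w a $ j * lie_form a c (basis_s i) (basis_s j)
       + u a $ i * (sig a * eta (a *v basis_s j) c) * Dw (aproj a (basis_s i) ** a) $ j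
       - w a $ j * (sig a * eta (a *v basis_s i) c) * Du (aproj a (basis_s j) ** a) $ i"
proof -
  have D_component: "((\<lambda>a. v a $ k) has_derivative (\<lambda>H. Dv H $ k)) (at a)"
    if "(v has_derivative Dv) (at a)" for v :: "'n mat \<Rightarrow> real^'n" and Dv k
    using bounded_linear.has_derivative[OF bounded_linear_vec_nth that] .
  show ?thesis
    using br_pull_XL_pull_XL[OF Lam_basis_s_in_c_alg Lam_basis_s_in_c_alg
        real_polynomial_function_component[OF u] real_polynomial_function_component[OF w] z]
      XL_lie_br_Lam_fnull[OF z basis_s_orth basis_s_orth]
      PiL_Lam_fnull[OF Dom_D(2)[OF z] basis_s_orth D_component[OF Dw]]
      PiL_Lam_fnull[OF Dom_D(2)[OF z] basis_s_orth D_component[OF Du]]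
      XL_Lam_fnull[OF z basis_s_orth]
    by (simp add: pull_apply[OF z] Lam_basis_s_def c_def)
qed

lemma br_XL_comb_XL_comb:
  assumes z: "(chi, a) \<in> Dom eta s" and u: "polynomial_function u" and w: "polynomial_function w"
    and Du: "(u has_derivative Du) (at a)" and Dw: "(w has_derivative Dw) (at a)"
  defines "c \<equiv> ann_vec chi"
  shows "br (XL_comb u) (XL_comb w) (chi, a) = lie_form a c (proj_s (u a)) (proj_s (w a))
     + sig a * eta (a *v proj_s (Dw (aproj a (proj_s (u a)) ** a))) c
     - sig a * eta (a *v proj_s (Du (aproj a (proj_s (w a)) ** a))) c"
proof -
  have lin_eta: "linear (\<lambda>x. sig a * eta (a *v x) c)" by (rule linearI) (simp_all add: algebra_simps)
  have lin_D: "linear (\<lambda>x. D (aproj a x ** a))" if "(v has_derivative D) (at a)" for v D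
    using has_derivative_bounded_linear[OF that] by (intro linear_aproj_mult bounded_linear.linear)
  have swap: "(\<Sum>i\<in>UNIV. \<Sum>j\<in>UNIV. w a $ j * (sig a * eta (a *v basis_s i) c) * Du (aproj a (basis_s j) ** a) $ i)
      = (\<Sum>j\<in>UNIV. \<Sum>i\<in>UNIV. w a $ j * (sig a * eta (a *v basis_s i) c) * Du (aproj a (basis_s j) ** a) $ i)"
    by (rule sum.swap)
  have "poly_rep (XL_comb w) (\<lambda>x. \<Sum>j\<in>UNIV. w (snd x) $ j *
      eta ((snd x ** Lam_basis_s j ** adj (snd x)) *v s) (fst x *v s))"
    unfolding XL_comb_def by (rule poly_rep_sum[OF finite poly_rep_XL_comb_term[OF w]])
  then have "br (XL_comb u) (XL_comb w) (chi, a)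
      = (\<Sum>i\<in>UNIV. br (\<lambda>v. pull eta s (\<lambda>a. u a $ i) v * XL eta s (Lam_basis_s i) v) (XL_comb w) (chi, a))"
    unfolding XL_comb_def[of u] by (intro br_sum_left[OF _ poly_rep_XL_comb_term[OF u] poly_rep_smooth_D z]) simp
  also have "\<dots> = (\<Sum>i\<in>UNIV. \<Sum>j\<in>UNIV.
      br (\<lambda>v. pull eta s (\<lambda>a. u a $ i) v * XL eta s (Lam_basis_s i) v)
         (\<lambda>v. pull eta s (\<lambda>a. w a $ j) v * XL eta s (Lam_basis_s j) v) (chi, a))"
    unfolding XL_comb_def[of w]
    by (rule sum.cong[OF refl], rule br_sum_right[OF _ poly_rep_XL_comb_term[OF w] poly_rep_XL_comb_term[OF u] z])
      simp
  also have "\<dots> = (\<Sum>i\<in>UNIV. \<Sum>j\<in>UNIV. u a $ i * w a $ j * lie_form a c (basis_s i) (basis_s j))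
      + (\<Sum>i\<in>UNIV. \<Sum>j\<in>UNIV. u a $ i * (sig a * eta (a *v basis_s j) c) * Dw (aproj a (basis_s i) ** a) $ j)
      - (\<Sum>j\<in>UNIV. \<Sum>i\<in>UNIV. w a $ j * (sig a * eta (a *v basis_s i) c) * Du (aproj a (basis_s j) ** a) $ i)"
    by (simp only: br_XL_comb_terms[OF z u w Du Dw, folded c_def] sum.distrib sum_subtractf swap)
  also have "\<dots> = lie_form a c (proj_s (u a)) (proj_s (w a))
     + sig a * eta (a *v proj_s (Dw (aproj a (proj_s (u a)) ** a))) c
     - sig a * eta (a *v proj_s (Du (aproj a (proj_s (w a)) ** a))) c"
    by (simp only: sum_basis_s_bilinear[OF bilinear_lie_form]
        sum_basis_s_linear_linear[OF lin_D[OF Dw] lin_eta] sum_basis_s_linear_linear[OF lin_D[OF Du] lin_eta])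
  finally show ?thesis .
qed

lemma br_kt2_kt2:
  assumes z: "z \<in> Dom eta s" and "phi \<in> ann eta s" "lam \<in> ann eta s" "psi \<in> ann eta s" "mu \<in> ann eta s"
  shows "br (kt2 eta s phi lam) (kt2 eta s psi mu) z = 0"
  using assms
  by (simp add: kt2_eq_pull br_pull_pull[OF _ _ z] smooth_A_real_polynomial_function
      real_polynomial_function_kt2_fun)

lemma br_kt1_kt2_aproj:
  assumes z: "(chi, a) \<in> Dom eta s" and lam: "lam \<in> ann eta s" and phi: "phi \<in> ann eta s"
    and psi: "psi \<in> ann eta s"
  shows "br (kt1 eta s lam) (kt2 eta s phi psi) (chi, a)
    = sig a * eta (aproj a (ann_coeff (ann_vec lam) a) *v (a *v ann_vec psi)) (ann_vec phi)"
proof -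
  define U where "U = ann_coeff (ann_vec lam) a"
  have U: "eta U s = 0"
    unfolding U_def by (rule ann_coeff_orth[OF Dom_D(2)[OF z] ann_vec_orth[OF lam]])
  have "br (kt1 eta s lam) (kt2 eta s phi psi) (chi, a)
      = sig a * eta ((aproj a U ** a) *v ann_vec psi) (ann_vec phi)
        + sig (aproj a U ** a) * eta (a *v ann_vec psi) (ann_vec phi)"
    using br_XL_comb_pull[OF z polynomial_function_ann_coeff real_polynomial_function_kt2_fun
        has_derivative_kt2_fun]
    by (simp add: kt1_eq_XL_comb[OF lam] kt2_eq_pull[OF phi psi] U_def[symmetric] proj_s_id[OF U])
  then show ?thesis using sig_aproj_mult[OF Dom_D(2)[OF z] U] unfolding U_def by simp
qed

lemma br_kt1_kt2:
  assumes z: "(chi, a) \<in> Dom eta s"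
    and lam: "lam \<in> ann eta s" and phi: "phi \<in> ann eta s" and psi: "psi \<in> ann eta s"
  defines "theta \<equiv> kdual eta (Lam eta t s)"
  shows "br (kt1 eta s lam) (kt2 eta s phi psi) (chi, a) =
           kt2 eta s lam psi (chi, a) * (kt2 eta s phi theta (chi, a) - ktil eta theta phi)
           + ktil eta lam phi * (kt2 eta s theta psi (chi, a) - ktil eta theta psi)"
proof -
  note a = Dom_D(2)[OF z]
  have theta: "theta \<in> ann eta s" "ann_vec theta = - t"
    unfolding theta_def by (rule theta_in_ann, rule ann_vec_theta)
  define vl vp vq where "vl = ann_vec lam" and "vp = ann_vec phi" and "vq = ann_vec psi"
  have lhs: "br (kt1 eta s lam) (kt2 eta s phi psi) (chi, a) = sig a * (sig a * eta (a *v fnull) (a *v vq) * eta vl vp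
     - sig a * eta vl (a *v vq) * eta (a *v fnull) vp - eta fnull (a *v vq) * eta vl vp + eta vl (a *v vq) * eta fnull vp)"
    unfolding br_kt1_kt2_aproj[OF z lam phi psi] eta_aproj[OF a apply_ann_coeff[OF a]] vl_def vp_def vq_def ..
  have rhs: "kt2 eta s lam psi (chi, a) = sig a * eta (a *v vq) vl"
    "kt2 eta s phi theta (chi, a) = - sig a * eta (a *v t) vp"
    "kt2 eta s theta psi (chi, a) = - sig a * eta (a *v vq) t"
    "ktil eta theta phi = - eta vp t" "ktil eta theta psi = - eta vq t" "ktil eta lam phi = eta vp vl"
    by (simp_all add: kt2_apply[OF z] ktil_ann lam phi psi theta vl_def vp_def vq_def)
  have "eta s vl = 0" "eta s vp = 0" "eta s vq = 0" "eta s (a *v vq) = 0"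
    using ann_vec_orth[OF lam] ann_vec_orth[OF phi] ann_vec_orth[OF psi] eta_A_grp_s[OF a, of vq]
    by (simp_all add: vl_def vp_def vq_def eta_sym[of s])
  moreover have "eta (a *v x) (a *v y) = eta x y" for x y
    using Dom_D(3)[OF z] by (simp add: O_grp_def)
  ultimately show ?thesis unfolding lhs rhs
    using sig_cases[OF a]
    by (auto simp: A_grp_apply_s[OF a] algebra_simps eta_sym[of "a *v vq" vl] eta_sym[of vp t]
        eta_sym[of vq t] eta_sym[of "a *v vq" t] eta_sym[of vp vl])
qed

lemma br_kt1_kt1_aproj:
  assumes z: "(chi, a) \<in> Dom eta s" and phi: "phi \<in> ann eta s" and psi: "psi \<in> ann eta s"
  defines "U \<equiv> ann_coeff (ann_vec phi) a" and "W \<equiv> ann_coeff (ann_vec psi) a"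
  shows "br (kt1 eta s phi) (kt1 eta s psi) (chi, a) = lie_form a (ann_vec chi) U W
    - eta (aproj a U *v ann_vec psi) (ann_vec chi) + eta (aproj a W *v ann_vec phi) (ann_vec chi)"
proof -
  note a = Dom_D(2)[OF z]
  have U: "eta U s = 0" and W: "eta W s = 0" and c: "eta (ann_vec chi) s = 0"
    unfolding U_def W_def
    using ann_coeff_orth[OF a] ann_vec_orth phi psi Dom_D(1)[OF z] by auto
  have "br (kt1 eta s phi) (kt1 eta s psi) (chi, a) = lie_form a (ann_vec chi) U W
     + sig a * eta (a *v proj_s (sig a *\<^sub>R (adj (aproj a U ** a) *v ann_vec psi)
         + sig (aproj a U ** a) *\<^sub>R (adj a *v ann_vec psi))) (ann_vec chi)
     - sig a * eta (a *v proj_s (sig a *\<^sub>R (adj (aproj a W ** a) *v ann_vec phi)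
         + sig (aproj a W ** a) *\<^sub>R (adj a *v ann_vec phi))) (ann_vec chi)"
    using br_XL_comb_XL_comb[OF z polynomial_function_ann_coeff polynomial_function_ann_coeff
        has_derivative_ann_coeff has_derivative_ann_coeff]
    by (simp add: kt1_eq_XL_comb phi psi U_def[symmetric] W_def[symmetric] proj_s_id[OF U] proj_s_id[OF W])
  then show ?thesis
    by (simp only: eta_derivative_ann_coeff_aproj[OF a U c] eta_derivative_ann_coeff_aproj[OF a W c])
qed

lemma br_kt1_kt1:
  assumes z: "(chi, a) \<in> Dom eta s" and phi: "phi \<in> ann eta s" and psi: "psi \<in> ann eta s"
  defines "theta \<equiv> kdual eta (Lam eta t s)"
  shows "br (kt1 eta s phi) (kt1 eta s psi) (chi, a) =
           ktil eta theta phi * kt1 eta s psi (chi, a) - ktil eta theta psi * kt1 eta s phi (chi, a)"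
proof -
  note a = Dom_D(2)[OF z]
  have theta: "theta \<in> ann eta s" "ann_vec theta = - t"
    unfolding theta_def by (rule theta_in_ann, rule ann_vec_theta)
  define vp vq c where "vp = ann_vec phi" and "vq = ann_vec psi" and "c = ann_vec chi"
  have lhs: "br (kt1 eta s phi) (kt1 eta s psi) (chi, a)
     = sig a * (eta (a *v fnull) vq * eta vp c - eta (a *v fnull) vp * eta vq c)
     - (sig a * eta (a *v fnull) vq * eta vp c - sig a * eta vp vq * eta (a *v fnull) c - eta fnull vq * eta vp c + eta vp vq * eta fnull c)
     + (sig a * eta (a *v fnull) vp * eta vq c - sig a * eta vq vp * eta (a *v fnull) c - eta fnull vp * eta vq c + eta vq vp * eta fnull c)"
    unfolding br_kt1_kt1_aproj[OF z phi psi] lie_form_ann_coeff[OF a]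
      eta_aproj[OF a apply_ann_coeff[OF a]] vp_def vq_def c_def ..
  have rhs: "kt1 eta s psi (chi, a) = eta c vq" "kt1 eta s phi (chi, a) = eta c vp"
    "ktil eta theta phi = - eta vp t" "ktil eta theta psi = - eta vq t"
    by (simp_all add: kt1_apply[OF z] ktil_ann phi psi theta vp_def vq_def c_def)
  have "eta s vp = 0" "eta s vq = 0" "eta s c = 0"
    using ann_vec_orth phi psi Dom_D(1)[OF z] by (simp_all add: vp_def vq_def c_def eta_sym[of s])
  then show ?thesis unfolding lhs rhs
    using sig_cases[OF a]
    by (auto simp: A_grp_apply_s[OF a] algebra_simps eta_sym[of c vq] eta_sym[of c vp]
        eta_sym[of vp t] eta_sym[of vq t] eta_sym[of vq vp])
qed

end

theorem mainTheorem1: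
  fixes eta :: "real^'n::finite \<Rightarrow> real^'n \<Rightarrow> real"
    and s t :: "real^'n"
    and phi psi lam mu :: "'n dual" and z :: "'n pt"
    and br :: "('n pt \<Rightarrow> real) \<Rightarrow> ('n pt \<Rightarrow> real) \<Rightarrow> 'n pt \<Rightarrow> real"
  assumes dim: "CARD('n) > 3"
    and eta: "lorentz_form eta"
    and ss: "eta s s = -1" and tt: "eta t t = 1" and st: "eta s t = 0"
    and br: "is_poisson_bracket eta s t br"
    and phi: "phi \<in> ann eta s" and psi: "psi \<in> ann eta s"
    and lam: "lam \<in> ann eta s" and mu: "mu \<in> ann eta s"
    and z: "z \<in> Dom eta s"
  defines "theta \<equiv> kdual eta (Lam eta t s)"
  shows "(br (kt1 eta s phi) (kt1 eta s psi) z =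
           ktil eta theta phi * kt1 eta s psi z - ktil eta theta psi * kt1 eta s phi z) \<and>
         (br (kt1 eta s lam) (kt2 eta s phi psi) z =
           kt2 eta s lam psi z * (kt2 eta s phi theta z - ktil eta theta phi)
           + ktil eta lam phi * (kt2 eta s theta psi z - ktil eta theta psi)) \<and>
         br (kt2 eta s phi lam) (kt2 eta s psi mu) z = 0"
proof -
  obtain basis :: "'n \<Rightarrow> real^'n" and i0 where "bilinear eta" "\<And>x y. eta x y = eta y x"
    "\<And>i j. eta (basis i) (basis j) = (if i = j then (if i = i0 then 1 else -1) else 0)"
    using eta unfolding lorentz_form_def by blast
  then interpret lorentz_bracket eta basis s t br
    using ss tt st br by unfold_locales simp_all
  obtain chi a where "z = (chi, a)" by fastforce
  then show ?thesis
    using z br_kt1_kt1[OF _ phi psi] br_kt1_kt2[OF _ lam phi psi] br_kt2_kt2[OF z phi lam psi mu]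
    unfolding theta_def by simp
qed

end
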